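(* For every $n\in\mathbb{N}^+$ the set $\mathcal{F}_n=\{G\in\mathcal{C}(\mathbb{T}^{\mathbb{N}}): \pi_{[0,n-1]}(G) \text{ is a circle group and } \pi_{[n,\infty)}(G) \text{ is the trivial group}\}$ is a $\frac{1}{2^{n-1}}$-net in $\mathcal{C}(\mathbb{T}^{\mathbb{N}})$, i.e. for every $G\in\mathcal{C}(\mathbb{T}^{\mathbb{N}})$ there is $F\in\mathcal{F}_n$ with $d_H(G,F)\le \frac{1}{2^{n-1}}$.
   Context: Let $\mathbb{T}=\mathbb{R}/\mathbb{Z}$ with its usual metric $d_{\mathbb{T}}$ (diameter $1/2$), and $\mathbb{T}^{\mathbb{N}}$ with metric $d(x,y)=\sum_{n=0}^\infty 2^{-n}d_{\mathbb{T}}(x(n),y(n))$. $\mathcal{C}(\mathbb{T}^{\mathbb{N}})$ is the set of nonempty compact connected subgroups of $\mathbb{T}^{\mathbb{N}}$ with the Hausdorff metric $d_H$ induced by $d$. For $G\in\mathcal{C}(\mathbb{T}^{\mathbb{N}})$, $\pi_{[0,n-1]}(G)$ is the projection of $G$ onto the first $n$ coordinates (a subgroup of $\mathbb{T}^n$) and $\pi_{[n,\infty)}(G)$ is its projection onto the coordinates $n,n+1,\dots$. A circle group means a subgroup isomorphic as a topological group to $\mathbb{T}$. *)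

theory Defs
  imports "HOL-Analysis.Analysis"
begin

text \<open>The circle T = R/Z is represented by the representatives [0,1) with addition mod 1.\<close>

definition T_set :: "real set" where
  "T_set = {0..<1}"

definition T_add :: "real \<Rightarrow> real \<Rightarrow> real" where
  "T_add a b = frac (a + b)"

definition dT :: "real \<Rightarrow> real \<Rightarrow> real" where
  "dT a b = \<bar>(a - b) - of_int (round (a - b))\<bar>"

definition T_top :: "real topology" where
  "T_top = Metric_space.mtopology T_set dT"

definition TN :: "(nat \<Rightarrow> real) set" where
  "TN = {x. \<forall>n. x n \<in> T_set}"

definition TN_zero :: "nat \<Rightarrow> real" where
  "TN_zero = (\<lambda>n. 0)"

definition TN_add :: "(nat \<Rightarrow> real) \<Rightarrow> (nat \<Rightarrow> real) \<Rightarrow> (nat \<Rightarrow> real)" where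
  "TN_add x y = (\<lambda>n. T_add (x n) (y n))"

definition TN_neg :: "(nat \<Rightarrow> real) \<Rightarrow> (nat \<Rightarrow> real)" where
  "TN_neg x = (\<lambda>n. frac (- x n))"

definition dTN :: "(nat \<Rightarrow> real) \<Rightarrow> (nat \<Rightarrow> real) \<Rightarrow> real" where
  "dTN x y = (\<Sum>n. dT (x n) (y n) / 2 ^ n)"

definition TN_top :: "(nat \<Rightarrow> real) topology" where
  "TN_top = Metric_space.mtopology TN dTN"

definition is_subgroup_TN :: "(nat \<Rightarrow> real) set \<Rightarrow> bool" where
  "is_subgroup_TN G \<longleftrightarrow> G \<subseteq> TN \<and> TN_zero \<in> G \<and>
     (\<forall>x\<in>G. \<forall>y\<in>G. TN_add x y \<in> G) \<and> (\<forall>x\<in>G. TN_neg x \<in> G)"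

definition CTN :: "(nat \<Rightarrow> real) set set" where
  "CTN = {G. G \<noteq> {} \<and> is_subgroup_TN G \<and> compactin TN_top G \<and> connectedin TN_top G}"

definition dH :: "(nat \<Rightarrow> real) set \<Rightarrow> (nat \<Rightarrow> real) set \<Rightarrow> real" where
  "dH A B = max (SUP a\<in>A. INF b\<in>B. dTN a b) (SUP b\<in>B. INF a\<in>A. dTN a b)"

text \<open>Projection onto coordinates 0..n-1, with T^n identified with the closed subgroup
  of T^N of sequences vanishing from coordinate n on (a topological group isomorphism).\<close>
definition proj_init :: "nat \<Rightarrow> (nat \<Rightarrow> real) \<Rightarrow> (nat \<Rightarrow> real)" where
  "proj_init n x = (\<lambda>i. if i < n then x i else 0)"

definition proj_tail :: "nat \<Rightarrow> (nat \<Rightarrow> real) \<Rightarrow> (nat \<Rightarrow> real)" where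
  "proj_tail n x = (\<lambda>i. x (i + n))"

definition circle_group :: "(nat \<Rightarrow> real) set \<Rightarrow> bool" where
  "circle_group H \<longleftrightarrow> H \<subseteq> TN \<and> (\<exists>f. homeomorphic_map T_top (subtopology TN_top H) f \<and>
       (\<forall>a\<in>T_set. \<forall>b\<in>T_set. f (T_add a b) = TN_add (f a) (f b)))"

end

theory Submission
  imports Defs
begin

text \<open>A point of \<open>G\<close> and its projection to the first \<open>n\<close> coordinates differ only in the
  coordinates \<open>\<ge> n\<close>, which contribute at most \<open>1/2\<^sup>n\<close> to \<open>d\<close>. So it suffices to find an integral
  direction \<open>w\<close> whose winding circle \<open>t \<mapsto> t w mod \<int>\<^sup>n\<close> lies in the projection \<open>P\<close> of \<open>G\<close> and
  passes within \<open>1/2\<^sup>n\<^sup>+\<^sup>2\<close> of every point of \<open>P\<close>.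

  The preimage \<open>L\<close> of \<open>P\<close> in \<open>\<real>\<^sup>n\<close> is a closed subgroup. The union \<open>W\<close> of the lines contained in
  \<open>L\<close> is a linear subspace, every short element of \<open>L\<close> lies in \<open>W\<close> (normalise a sequence of short
  elements and pass to a convergent subsequence), and connectedness of \<open>G\<close> then gives
  \<open>P = W mod \<int>\<^sup>n\<close>. By Dirichlet's simultaneous approximation the points \<open>Z/K\<close> with integral
  \<open>Z \<in> W\<close> are dense in \<open>W\<close>, so finitely many of them, \<open>Z\<^sub>l/K\<^sub>l\<close>, approximate \<open>P\<close>. They are merged
  into the single direction \<open>w = \<Sum>\<^sub>l N\<^sup>l Z\<^sub>l\<close>: at time \<open>\<lfloor>N/K\<^sub>j\<rfloor>/N\<^sup>j\<^sup>+\<^sup>1\<close> the circle is within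
  \<open>O(1/N)\<close> of \<open>Z\<^sub>j/K\<^sub>j\<close>. Rescaling \<open>w\<close> to a primitive direction makes the circle a circle group.\<close>

section \<open>The metrics on \<open>\<T>\<close> and \<open>\<T>\<^sup>\<nat>\<close>\<close>

lemma dT_le: "dT a b \<le> \<bar>a - b - of_int m\<bar>"
  unfolding dT_def by (rule round_diff_minimal)

lemma dT_attained: "\<exists>m. dT a b = \<bar>a - b - of_int m\<bar>"
  unfolding dT_def by blast

lemma dT_nonneg [simp]: "0 \<le> dT a b"
  by (simp add: dT_def)

lemma dT_refl [simp]: "dT a a = 0"
  by (simp add: dT_def)

lemma dT_le_half: "dT a b \<le> 1/2"
  unfolding dT_def using of_int_round_abs_le[of "a - b"] by (simp add: abs_minus_commute)

lemma dT_half_0: "dT (1/2) 0 = 1/2"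
proof -
  have "round (1/2 :: real) = 1" by (simp add: round_def)
  then show ?thesis by (simp add: dT_def)
qed

lemma dT_le_abs: "dT a b \<le> \<bar>a - b\<bar>"
  using dT_le[of a b 0] by simp

lemma dT_commute: "dT a b = dT b a"
proof -
  have "dT a b \<le> dT b a" for a b
  proof -
    obtain m where "dT b a = \<bar>b - a - of_int m\<bar>" using dT_attained by blast
    moreover have "dT a b \<le> \<bar>a - b - of_int (- m)\<bar>" by (rule dT_le)
    ultimately show ?thesis by simp
  qed
  then show ?thesis by (meson order_antisym)
qed

lemma dT_triangle: "dT a c \<le> dT a b + dT b c"
proof -
  obtain m1 where m1: "dT a b = \<bar>a - b - of_int m1\<bar>" using dT_attained by blast
  obtain m2 where m2: "dT b c = \<bar>b - c - of_int m2\<bar>" using dT_attained by blast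
  have "dT a c \<le> \<bar>a - c - of_int (m1 + m2)\<bar>" by (rule dT_le)
  also have "\<dots> \<le> \<bar>a - b - of_int m1\<bar> + \<bar>b - c - of_int m2\<bar>" by simp
  finally show ?thesis using m1 m2 by simp
qed

lemma dT_eq_0_iff: "a \<in> T_set \<Longrightarrow> b \<in> T_set \<Longrightarrow> dT a b = 0 \<longleftrightarrow> a = b"
proof
  assume ab: "a \<in> T_set" "b \<in> T_set" and "dT a b = 0"
  then obtain m where m: "a - b = of_int m" using dT_attained[of a b] by auto
  moreover have "\<bar>a - b\<bar> < 1" using ab by (auto simp: T_set_def)
  ultimately have "m = 0" by (metis of_int_abs of_int_less_1_iff zabs_less_one_iff)
  then show "a = b" using m by simp
qed simp

lemma dT_add_int_left: "dT (a + of_int k) b = dT a b"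
proof (rule antisym)
  obtain m where "dT a b = \<bar>a - b - of_int m\<bar>" using dT_attained by blast
  moreover have "dT (a + of_int k) b \<le> \<bar>a + of_int k - b - of_int (m + k)\<bar>" by (rule dT_le)
  ultimately show "dT (a + of_int k) b \<le> dT a b" by simp
  obtain m' where "dT (a + of_int k) b = \<bar>a + of_int k - b - of_int m'\<bar>" using dT_attained by blast
  moreover have "dT a b \<le> \<bar>a - b - of_int (m' - k)\<bar>" by (rule dT_le)
  ultimately show "dT a b \<le> dT (a + of_int k) b" by simp
qed

lemma dT_frac: "dT (frac x) (frac y) = dT x y"
proof -
  have fx: "frac x = x + of_int (- \<lfloor>x\<rfloor>)" and fy: "frac y = y + of_int (- \<lfloor>y\<rfloor>)"
    by (simp_all add: frac_def)
  have "dT (frac x) (frac y) = dT x (frac y)" by (simp only: fx dT_add_int_left)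
  also have "\<dots> = dT (frac y) x" by (rule dT_commute)
  also have "\<dots> = dT y x" by (simp only: fy dT_add_int_left)
  finally show ?thesis by (simp add: dT_commute)
qed

lemma summable_dT: "summable (\<lambda>i. dT (x i) (y i) / 2 ^ i)"
proof (rule summable_comparison_test)
  have "dT (x i) (y i) / 2 ^ i \<le> (1/2) ^ i" for i
    using dT_le_half[of "x i" "y i"] by (simp add: power_one_over divide_right_mono)
  then show "\<exists>N. \<forall>i\<ge>N. norm (dT (x i) (y i) / 2 ^ i) \<le> (1/2) ^ i" by simp
qed simp

lemma dTN_nonneg: "0 \<le> dTN x y"
  unfolding dTN_def by (rule suminf_nonneg[OF summable_dT]) simp

lemma dT_le_dTN: "dT (x i) (y i) \<le> 2 ^ i * dTN x y"
proof -
  have "dT (x i) (y i) / 2 ^ i \<le> dTN x y"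
    unfolding dTN_def using sum_le_suminf[OF summable_dT, of "{i}" x y] by auto
  then show ?thesis by (simp add: field_simps)
qed

interpretation TN_metric: Metric_space TN dTN
proof
  show "0 \<le> dTN x y" for x y by (rule dTN_nonneg)
  show "dTN x y = dTN y x" for x y unfolding dTN_def by (simp add: dT_commute)
  show "dTN x y = 0 \<longleftrightarrow> x = y" if "x \<in> TN" "y \<in> TN" for x y
  proof
    assume "dTN x y = 0"
    then have "dT (x i) (y i) = 0" for i
      unfolding dTN_def using suminf_eq_zero_iff[OF summable_dT] by auto
    then show "x = y" using that by (auto simp: TN_def dT_eq_0_iff)
  qed (simp add: dTN_def)
  show "dTN x z \<le> dTN x y + dTN y z" for x y z
  proof -
    have "dTN x z \<le> (\<Sum>i. dT (x i) (y i) / 2 ^ i + dT (y i) (z i) / 2 ^ i)"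
      unfolding dTN_def
      by (rule suminf_le[OF _ summable_dT summable_add[OF summable_dT summable_dT]])
         (simp add: add_divide_distrib[symmetric] divide_right_mono dT_triangle)
    also have "\<dots> = dTN x y + dTN y z"
      unfolding dTN_def by (rule suminf_add[OF summable_dT summable_dT, symmetric])
    finally show ?thesis .
  qed
qed

interpretation T_metric: Metric_space T_set dT
proof
  show "dT x y = 0 \<longleftrightarrow> x = y" if "x \<in> T_set" "y \<in> T_set" for x y
    using dT_eq_0_iff that by blast
qed (simp_all add: dT_commute dT_triangle)

lemma connectedin_TN_locally_constant:
  assumes conn: "connectedin TN_top G" and G: "G \<subseteq> TN" and \<rho>: "\<rho> > 0"
    and step: "\<And>g h. g \<in> G \<Longrightarrow> h \<in> G \<Longrightarrow> dTN g h < \<rho> \<Longrightarrow> P h \<Longrightarrow> P g"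
    and a: "a \<in> G" "P a"
  shows "\<forall>g\<in>G. P g"
proof -
  define E1 where "E1 = \<Union>{TN_metric.mball h \<rho> | h. h \<in> G \<and> P h}"
  define E2 where "E2 = \<Union>{TN_metric.mball h \<rho> | h. h \<in> G \<and> \<not> P h}"
  have centre: "g \<in> TN_metric.mball g \<rho>" if "g \<in> G" for g
    using that G \<rho> by auto
  have open_E: "openin TN_top E1" "openin TN_top E2"
    unfolding E1_def E2_def TN_top_def by (auto intro: openin_Union)
  have in_E1: "g \<in> E1" if "g \<in> G" "P g" for g
    unfolding E1_def using that centre[OF that(1)] by blast
  have in_E2: "g \<in> E2" if "g \<in> G" "\<not> P g" for g
    unfolding E2_def using that centre[OF that(1)] by blast
  have cover: "G \<subseteq> E1 \<union> E2" using in_E1 in_E2 by blast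
  have disjoint: "E1 \<inter> E2 \<inter> G = {}"
  proof (rule ccontr)
    assume "E1 \<inter> E2 \<inter> G \<noteq> {}"
    then obtain g h1 h2 where g: "g \<in> G"
      and h1: "h1 \<in> G" "P h1" "g \<in> TN_metric.mball h1 \<rho>"
      and h2: "h2 \<in> G" "\<not> P h2" "g \<in> TN_metric.mball h2 \<rho>"
      unfolding E1_def E2_def by blast
    have "dTN g h1 < \<rho>" "dTN h2 g < \<rho>" using h1(3) h2(3) TN_metric.commute by auto
    then show False using step[OF g h1(1)] step[OF h2(1) g] h1(2) h2(2) by blast
  qed
  have "E1 \<inter> G \<noteq> {}" using in_E1 a by blast
  then have "E2 \<inter> G = {}" using connectedinD[OF conn open_E cover disjoint] by blast
  then show ?thesis using in_E2 by blast
qed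

section \<open>Reduction modulo \<open>\<int>\<close> of the first \<open>n\<close> coordinates\<close>

definition torus_proj :: "nat \<Rightarrow> (nat \<Rightarrow> real) \<Rightarrow> (nat \<Rightarrow> real)" where
  "torus_proj n x = (\<lambda>i. if i < n then frac (x i) else 0)"

lemma torus_proj_in_TN: "torus_proj n x \<in> TN"
  by (auto simp: torus_proj_def TN_def T_set_def frac_lt_1)

lemma torus_proj_idem [simp]: "torus_proj n (torus_proj n x) = torus_proj n x"
  by (auto simp: torus_proj_def)

lemma TN_add_torus_proj: "TN_add (torus_proj n x) (torus_proj n y) = torus_proj n (\<lambda>i. x i + y i)"
  by (auto simp: torus_proj_def TN_add_def T_add_def)

lemma TN_neg_torus_proj: "TN_neg (torus_proj n x) = torus_proj n (\<lambda>i. - x i)"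
  by (auto simp: torus_proj_def TN_neg_def frac_neg_frac)

lemma torus_proj_zero: "torus_proj n (\<lambda>i. 0) = TN_zero"
  by (auto simp: torus_proj_def TN_zero_def)

lemma torus_proj_cong: "(\<And>i. i < n \<Longrightarrow> x i = y i) \<Longrightarrow> torus_proj n x = torus_proj n y"
  by (auto simp: torus_proj_def)

lemma torus_proj_add_Ints:
  "(\<And>i. i < n \<Longrightarrow> z i \<in> \<int>) \<Longrightarrow> torus_proj n (\<lambda>i. x i + z i) = torus_proj n x"
  by (auto simp: torus_proj_def frac_add_int_right)

lemma torus_proj_Ints: "(\<And>i. i < n \<Longrightarrow> z i \<in> \<int>) \<Longrightarrow> torus_proj n z = TN_zero"
  by (auto simp: torus_proj_def TN_zero_def)

lemma torus_proj_TN_coord: "x \<in> TN \<Longrightarrow> i < n \<Longrightarrow> torus_proj n x i = x i"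
  by (auto simp: torus_proj_def TN_def T_set_def)

lemma proj_init_eq_torus_proj: "x \<in> TN \<Longrightarrow> proj_init n x = torus_proj n x"
  by (auto simp: torus_proj_def TN_def T_set_def proj_init_def)

lemma torus_proj_TN_add:
  "x \<in> TN \<Longrightarrow> y \<in> TN \<Longrightarrow> torus_proj n (TN_add x y) = TN_add (torus_proj n x) (torus_proj n y)"
  by (auto simp: torus_proj_def TN_add_def T_add_def TN_def T_set_def)

lemma torus_proj_TN_neg: "x \<in> TN \<Longrightarrow> torus_proj n (TN_neg x) = TN_neg (torus_proj n x)"
  by (auto simp: torus_proj_def TN_neg_def TN_def T_set_def)

lemma dT_torus_proj_le:
  assumes "i < n" "z \<in> \<int>"
  shows "dT (torus_proj n x i) (torus_proj n y i) \<le> \<bar>x i - y i - z\<bar>"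
  using assms by (auto simp: torus_proj_def dT_frac elim!: Ints_cases intro: dT_le)

lemma dT_torus_proj_le_abs: "i < n \<Longrightarrow> dT (torus_proj n x i) (torus_proj n y i) \<le> \<bar>x i - y i\<bar>"
  using dT_torus_proj_le[of i n 0] by simp

text \<open>Coordinates from \<open>n\<close> on contribute at most \<open>\<Sum>i\<ge>n. (1/2) / 2^i = 1/2^n\<close> to \<open>dTN\<close>.\<close>

lemma dTN_le_head_plus_tail: "dTN x y \<le> (\<Sum>i<n. dT (x i) (y i) / 2 ^ i) + 1 / 2 ^ n"
proof -
  have s: "summable (\<lambda>i. dT (x i) (y i) / 2 ^ i)" by (rule summable_dT)
  have "dTN x y = (\<Sum>m. dT (x (m + n)) (y (m + n)) / 2 ^ (m + n)) + (\<Sum>i<n. dT (x i) (y i) / 2 ^ i)"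
    unfolding dTN_def using suminf_split_initial_segment[OF s, of n] by simp
  moreover have "(\<Sum>m. dT (x (m + n)) (y (m + n)) / 2 ^ (m + n)) \<le> (\<Sum>m. (1 / 2 ^ (n+1)) * (1/2) ^ m)"
  proof (rule suminf_le)
    show "summable (\<lambda>m. dT (x (m + n)) (y (m + n)) / 2 ^ (m + n))"
      using summable_ignore_initial_segment[OF s, of n] by simp
    show "summable (\<lambda>m. (1 / 2 ^ (n+1)) * (1/2::real) ^ m)"
      by (intro summable_mult) simp
    have "dT (x (m + n)) (y (m + n)) / 2 ^ (m + n) \<le> (1/2) / 2 ^ (m + n)" for m
      using dT_le_half by (intro divide_right_mono) auto
    then show "dT (x (m + n)) (y (m + n)) / 2 ^ (m + n) \<le> (1 / 2 ^ (n+1)) * (1/2) ^ m" for m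
      by (simp add: power_add power_one_over field_simps)
  qed
  moreover have "(\<Sum>m. (1 / 2 ^ (n+1)) * (1/2::real) ^ m) = 1 / 2 ^ n"
    using suminf_mult[of "\<lambda>m. (1/2::real)^m" "1 / 2 ^ (n+1)"] suminf_geometric[of "1/2::real"]
    by simp
  ultimately show ?thesis by linarith
qed

lemma dTN_le_of_head_le:
  assumes "\<And>i. i < n \<Longrightarrow> dT (x i) (y i) \<le> e" and "0 \<le> e"
  shows "dTN x y \<le> 2 * e + 1 / 2 ^ n"
proof -
  have "(\<Sum>i<n. dT (x i) (y i) / 2 ^ i) \<le> (\<Sum>i<n. e * (1/2) ^ i)"
    by (intro sum_mono) (auto simp: power_one_over intro!: divide_right_mono assms)
  also have "\<dots> = e * (\<Sum>i<n. (1/2) ^ i)" by (simp add: sum_distrib_left)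
  also have "\<dots> \<le> e * 2"
  proof -
    have "(\<Sum>i<n. (1/2::real) ^ i) \<le> (\<Sum>i. (1/2) ^ i)" by (rule sum_le_suminf) auto
    then show ?thesis using suminf_geometric[of "1/2::real"] \<open>0 \<le> e\<close> by (intro mult_left_mono) auto
  qed
  finally show ?thesis using dTN_le_head_plus_tail[of x y n] by linarith
qed

lemma dTN_torus_proj_le: "dTN (torus_proj n x) (torus_proj n y) \<le> (\<Sum>i<n. \<bar>x i - y i\<bar>)"
proof -
  let ?g = "\<lambda>i. if i < n then \<bar>x i - y i\<bar> else 0"
  have fin: "\<And>i. i \<notin> {..<n} \<Longrightarrow> ?g i = 0" by auto
  have "dTN (torus_proj n x) (torus_proj n y) \<le> suminf ?g"
    unfolding dTN_def
  proof (rule suminf_le[OF _ summable_dT summable_finite[OF finite_lessThan fin]])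
    fix i
    have "dT (torus_proj n x i) (torus_proj n y i) / 2 ^ i \<le> dT (torus_proj n x i) (torus_proj n y i)"
      using frac_le[of "dT (torus_proj n x i) (torus_proj n y i)" _ 1 "2 ^ i"] by simp
    then show "dT (torus_proj n x i) (torus_proj n y i) / 2 ^ i \<le> ?g i"
      using dT_torus_proj_le_abs[of i n x y] by (auto simp: torus_proj_def)
  qed
  also have "\<dots> = sum ?g {..<n}" by (rule suminf_finite[OF finite_lessThan fin])
  also have "\<dots> = (\<Sum>i<n. \<bar>x i - y i\<bar>)" by simp
  finally show ?thesis .
qed

lemma dH_leI:
  assumes "A \<noteq> {}" "B \<noteq> {}"
    and "\<And>a. a \<in> A \<Longrightarrow> \<exists>b\<in>B. dTN a b \<le> r"
    and "\<And>b. b \<in> B \<Longrightarrow> \<exists>a\<in>A. dTN a b \<le> r"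
  shows "dH A B \<le> r"
proof -
  have bdd: "bdd_below ((\<lambda>b. dTN a b) ` B)" "bdd_below ((\<lambda>a. dTN a b) ` A)" for a b
    by (auto intro: bdd_belowI[of _ 0] simp: dTN_nonneg)
  have "(INF b\<in>B. dTN a b) \<le> r" if "a \<in> A" for a
    using assms(3)[OF that] cINF_lower[OF bdd(1)] by (meson order_trans)
  moreover have "(INF a\<in>A. dTN a b) \<le> r" if "b \<in> B" for b
    using assms(4)[OF that] cINF_lower[OF bdd(2)] by (meson order_trans)
  ultimately show ?thesis
    using assms(1,2) by (simp add: dH_def cSUP_least)
qed

lemma continuous_map_into_TN_top:
  assumes "f ` topspace X \<subseteq> TN"
    and "\<And>x e. x \<in> topspace X \<Longrightarrow> e > 0 \<Longrightarrow> \<exists>U. openin X U \<and> x \<in> U \<and> (\<forall>y\<in>U. dTN (f x) (f y) < e)"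
  shows "continuous_map X TN_top f"
  unfolding TN_top_def TN_metric.continuous_map_to_metric
proof (intro ballI allI impI)
  fix x e assume x: "x \<in> topspace X" and e: "(e::real) > 0"
  then obtain U where U: "openin X U" "x \<in> U" "\<forall>y\<in>U. dTN (f x) (f y) < e" using assms(2) by blast
  have "U \<subseteq> topspace X" using U(1) openin_subset by blast
  then show "\<exists>U. openin X U \<and> x \<in> U \<and> (\<forall>y\<in>U. f y \<in> TN_metric.mball (f x) e)"
    using U x assms(1) by (intro exI[of _ U]) auto
qed

section \<open>Winding circles\<close>

definition winding :: "nat \<Rightarrow> (nat \<Rightarrow> real) \<Rightarrow> real \<Rightarrow> (nat \<Rightarrow> real)" where
  "winding n w t = torus_proj n (\<lambda>i. t * w i)"

lemma winding_in_TN: "winding n w t \<in> TN"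
  by (simp add: winding_def torus_proj_in_TN)

lemma TN_add_winding: "TN_add (winding n w s) (winding n w t) = winding n w (s + t)"
  by (simp add: winding_def TN_add_torus_proj distrib_right)

lemma TN_neg_winding: "TN_neg (winding n w s) = winding n w (- s)"
  by (simp add: winding_def TN_neg_torus_proj)

lemma winding_0: "winding n w 0 = TN_zero"
  by (simp add: winding_def torus_proj_zero)

lemma dTN_winding_le: "dTN (winding n w s) (winding n w t) \<le> \<bar>s - t\<bar> * (\<Sum>i<n. \<bar>w i\<bar>)"
proof -
  have "dTN (winding n w s) (winding n w t) \<le> (\<Sum>i<n. \<bar>s * w i - t * w i\<bar>)"
    unfolding winding_def by (rule dTN_torus_proj_le)
  also have "\<dots> = \<bar>s - t\<bar> * (\<Sum>i<n. \<bar>w i\<bar>)"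
    by (simp add: sum_distrib_left abs_mult left_diff_distrib[symmetric])
  finally show ?thesis .
qed

lemma winding_add_Ints:
  assumes "\<And>i. i < n \<Longrightarrow> w i \<in> \<int>" "k \<in> \<int>"
  shows "winding n w (t + k) = winding n w t"
proof -
  have "winding n w (t + k) = torus_proj n (\<lambda>i. t * w i + k * w i)"
    unfolding winding_def by (simp add: distrib_right)
  also have "\<dots> = winding n w t"
    unfolding winding_def using assms by (intro torus_proj_add_Ints) auto
  finally show ?thesis .
qed

lemma winding_frac:
  "(\<And>i. i < n \<Longrightarrow> w i \<in> \<int>) \<Longrightarrow> winding n w (frac t) = winding n w t"
  using winding_add_Ints[of n w "of_int \<lfloor>t\<rfloor>" "frac t"] by (simp add: frac_def)

lemma range_winding_eq:
  assumes "\<And>i. i < n \<Longrightarrow> w i \<in> \<int>"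
  shows "range (winding n w) = winding n w ` T_set"
proof
  show "range (winding n w) \<subseteq> winding n w ` T_set"
  proof
    fix x assume "x \<in> range (winding n w)"
    then obtain t where "x = winding n w (frac t)" using winding_frac[of n w] assms by auto
    then show "x \<in> winding n w ` T_set" by (auto simp: T_set_def frac_lt_1)
  qed
qed auto

lemma continuous_map_winding: "continuous_map euclideanreal TN_top (winding n w)"
proof (rule continuous_map_into_TN_top)
  show "winding n w ` topspace euclideanreal \<subseteq> TN" by (auto simp: winding_in_TN)
  fix x :: real and e :: real assume e: "e > 0"
  define C where "C = (\<Sum>i<n. \<bar>w i\<bar>) + 1"
  have C: "C > 0" unfolding C_def by (simp add: add_nonneg_pos sum_nonneg)
  show "\<exists>U. openin euclideanreal U \<and> x \<in> U \<and> (\<forall>y\<in>U. dTN (winding n w x) (winding n w y) < e)"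
  proof (intro exI[of _ "ball x (e / C)"] conjI ballI)
    fix y assume "y \<in> ball x (e / C)"
    then have "\<bar>x - y\<bar> * C < e" using C by (simp add: dist_real_def pos_less_divide_eq)
    moreover have "\<bar>x - y\<bar> * (\<Sum>i<n. \<bar>w i\<bar>) \<le> \<bar>x - y\<bar> * C"
      unfolding C_def by (intro mult_left_mono) auto
    ultimately show "dTN (winding n w x) (winding n w y) < e"
      using dTN_winding_le[of n w x y] by linarith
  qed (use e C in auto)
qed

lemma range_winding_in_CTN:
  assumes "\<And>i. i < n \<Longrightarrow> w i \<in> \<int>"
  shows "range (winding n w) \<in> CTN"
proof -
  have "is_subgroup_TN (range (winding n w))"
    unfolding is_subgroup_TN_def
    by (auto simp: winding_in_TN TN_add_winding TN_neg_winding intro: range_eqI[of _ _ 0] winding_0[symmetric])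
  moreover have "range (winding n w) = winding n w ` {0..1}"
    using range_winding_eq[of n w, OF assms] by (auto simp: T_set_def)
  moreover have "compactin TN_top (winding n w ` {0..1})"
    by (rule image_compactin[OF _ continuous_map_winding]) simp
  moreover have "connectedin TN_top (winding n w ` {0..1})"
    by (rule connectedin_continuous_map_image[OF continuous_map_winding]) simp
  ultimately show ?thesis by (auto simp: CTN_def)
qed

lemma proj_init_range_winding: "proj_init n ` range (winding n w) = range (winding n w)"
proof -
  have "proj_init n (winding n w t) = winding n w t" for t
    using proj_init_eq_torus_proj[OF winding_in_TN, of n n w t] by (simp add: winding_def)
  then show ?thesis by (simp add: image_image)
qed

lemma proj_tail_range_winding: "proj_tail n ` range (winding n w) = {TN_zero}"
proof -
  have "proj_tail n (winding n w t) = TN_zero" for t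
    by (auto simp: proj_tail_def winding_def torus_proj_def TN_zero_def)
  then show ?thesis by (auto simp: image_image)
qed

lemma continuous_map_frac_T_top: "continuous_map euclideanreal T_top frac"
  unfolding T_top_def T_metric.continuous_map_to_metric
proof (intro ballI allI impI)
  fix x :: real and e :: real assume "e > 0"
  show "\<exists>U. openin euclideanreal U \<and> x \<in> U \<and> (\<forall>y\<in>U. frac y \<in> T_metric.mball (frac x) e)"
  proof (intro exI[of _ "ball x e"] conjI ballI)
    fix y assume "y \<in> ball x e"
    then have "dT (frac x) (frac y) < e" using dT_le_abs[of x y] by (simp add: dT_frac dist_real_def)
    moreover have "frac x \<in> T_set" "frac y \<in> T_set" by (auto simp: T_set_def frac_lt_1)
    ultimately show "frac y \<in> T_metric.mball (frac x) e" by simp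
  qed (use \<open>e > 0\<close> in auto)
qed

lemma compact_space_T_top: "compact_space T_top"
proof -
  have "frac ` {0..1} = T_set"
    by (auto simp: T_set_def frac_lt_1 image_iff) (metis atLeastAtMost_iff frac_eq less_eq_real_def)
  moreover have "compactin T_top (frac ` {0..1})"
    by (rule image_compactin[OF _ continuous_map_frac_T_top]) simp
  ultimately show ?thesis unfolding compact_space_def by (simp add: T_top_def)
qed

lemma continuous_map_winding_T_top:
  assumes "\<And>i. i < n \<Longrightarrow> w i \<in> \<int>"
  shows "continuous_map T_top TN_top (winding n w)"
proof (rule continuous_map_into_TN_top)
  show "winding n w ` topspace T_top \<subseteq> TN" by (auto simp: winding_in_TN)
  fix x e assume x: "x \<in> topspace T_top" and e: "(e::real) > 0"
  define C where "C = (\<Sum>i<n. \<bar>w i\<bar>) + 1"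
  have C: "C > 0" unfolding C_def by (simp add: add_nonneg_pos sum_nonneg)
  show "\<exists>U. openin T_top U \<and> x \<in> U \<and> (\<forall>y\<in>U. dTN (winding n w x) (winding n w y) < e)"
  proof (intro exI[of _ "T_metric.mball x (e / C)"] conjI ballI)
    fix y assume "y \<in> T_metric.mball x (e / C)"
    then have "dT x y < e / C" by simp
    moreover obtain r where "dT x y = \<bar>x - y - of_int r\<bar>" using dT_attained by blast
    then have r: "dT x y = \<bar>x - (y + of_int r)\<bar>" by (simp add: algebra_simps)
    ultimately have "\<bar>x - (y + of_int r)\<bar> * C < e" using C by (simp add: pos_less_divide_eq)
    moreover have "\<bar>x - (y + of_int r)\<bar> * (\<Sum>i<n. \<bar>w i\<bar>) \<le> \<bar>x - (y + of_int r)\<bar> * C"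
      unfolding C_def by (intro mult_left_mono) auto
    moreover have "winding n w (y + of_int r) = winding n w y"
      using assms by (intro winding_add_Ints) auto
    ultimately show "dTN (winding n w x) (winding n w y) < e"
      using dTN_winding_le[of n w x "y + of_int r"] by simp
  qed (use x e C in \<open>auto simp: T_top_def\<close>)
qed

text \<open>For an integral \<open>v\<close> this says that the entries \<open>v 0, \<dots>, v (n - 1)\<close> are coprime, i.e.
  that \<open>1\<close> is the least period of \<open>winding n v\<close>.\<close>

definition primitive_dir :: "nat \<Rightarrow> (nat \<Rightarrow> real) \<Rightarrow> bool" where
  "primitive_dir n v \<longleftrightarrow> (\<forall>s. 0 < s \<longrightarrow> s < 1 \<longrightarrow> \<not> (\<forall>i<n. s * v i \<in> \<int>))"

lemma inj_on_winding:
  assumes "primitive_dir n v"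
  shows "inj_on (winding n v) T_set"
proof (rule inj_onI)
  have main: "s = t" if s: "s \<in> T_set" and t: "t \<in> T_set" and st: "s \<le> t"
    and eq: "winding n v s = winding n v t" for s t
  proof (rule ccontr)
    assume "s \<noteq> t"
    moreover have "(t - s) * v i \<in> \<int>" if "i < n" for i
    proof -
      have "frac (s * v i) = frac (t * v i)"
        using fun_cong[OF eq, of i] that by (simp add: winding_def torus_proj_def)
      then obtain k where "t * v i = s * v i + of_int k" by (metis frac_eqE)
      then show ?thesis by (simp add: algebra_simps)
    qed
    moreover have "0 < t - s" "t - s < 1" using s t st \<open>s \<noteq> t\<close> by (auto simp: T_set_def)
    ultimately show False using assms unfolding primitive_dir_def by blast
  qed
  fix s t assume "s \<in> T_set" "t \<in> T_set" "winding n v s = winding n v t"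
  then show "s = t" using main[of s t] main[of t s] by (metis linorder_le_cases)
qed

lemma circle_group_range_winding_primitive:
  assumes vint: "\<And>i. i < n \<Longrightarrow> v i \<in> \<int>" and prim: "primitive_dir n v"
  shows "circle_group (range (winding n v))"
  unfolding circle_group_def
proof (intro conjI exI[of _ "winding n v"] ballI)
  let ?H = "range (winding n v)"
  show "?H \<subseteq> TN" by (auto simp: winding_in_TN)
  show "winding n v (T_add a b) = TN_add (winding n v a) (winding n v b)" for a b
    unfolding T_add_def TN_add_winding using winding_frac[of n v] vint by blast
  show "homeomorphic_map T_top (subtopology TN_top ?H) (winding n v)"
  proof (rule continuous_imp_homeomorphic_map)
    show "continuous_map T_top (subtopology TN_top ?H) (winding n v)"
      using continuous_map_winding_T_top[of n v] vint
      by (auto intro: continuous_map_into_subtopology)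
    show "Hausdorff_space (subtopology TN_top ?H)"
      by (simp add: TN_top_def TN_metric.Hausdorff_space_mtopology Hausdorff_space_subtopology)
    show "winding n v ` topspace T_top = topspace (subtopology TN_top ?H)"
      using range_winding_eq[of n v] vint by (auto simp: T_top_def TN_top_def winding_in_TN)
    show "inj_on (winding n v) (topspace T_top)"
      using inj_on_winding[OF prim] by (simp add: T_top_def)
  qed (rule compact_space_T_top)
qed

lemma exists_primitive_rescaling:
  assumes wint: "\<And>i. i < n \<Longrightarrow> w i \<in> \<int>" and i0: "i0 < n" "w i0 \<noteq> 0"
  obtains m :: real where "m > 0" "\<And>i. i < n \<Longrightarrow> m * w i \<in> \<int>"
    "primitive_dir n (\<lambda>i. m * w i)"
proof -
  obtain c where c: "w i0 = of_int c" using wint[OF i0(1)] by (auto elim: Ints_cases)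
  define a where "a = nat \<bar>c\<bar>"
  have a: "a \<ge> 1" "real a = \<bar>w i0\<bar>" using c i0(2) by (auto simp: a_def)
  define K where "K = {k::nat. 1 \<le> k \<and> (\<forall>i<n. (real k / real a) * w i \<in> \<int>)}"
  have "a \<in> K" using a wint by (simp add: K_def)
  define k0 where "k0 = (LEAST k. k \<in> K)"
  have k0: "k0 \<in> K" unfolding k0_def using \<open>a \<in> K\<close> by (rule LeastI)
  have k0_min: "k0 \<le> k" if "k \<in> K" for k unfolding k0_def using that by (rule Least_le)
  define m where "m = real k0 / real a"
  have "m > 0" using k0 a by (simp add: m_def K_def)
  moreover have "m * w i \<in> \<int>" if "i < n" for i using k0 that by (simp add: K_def m_def)
  moreover have "primitive_dir n (\<lambda>i. m * w i)"
    unfolding primitive_dir_def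
  proof (intro allI impI notI)
    fix s assume s: "0 < s" "s < 1" and all: "\<forall>i<n. s * (m * w i) \<in> \<int>"
    have "\<bar>s * (m * w i0)\<bar> \<in> \<int>" using all i0(1) by auto
    moreover have "\<bar>s * (m * w i0)\<bar> = s * real k0" using s a by (simp add: m_def abs_mult)
    ultimately obtain j where j: "s * real k0 = of_int j" by (auto elim: Ints_cases)
    have "real k0 \<ge> 1" using k0 by (simp add: K_def)
    then have "0 < s * real k0" "s * real k0 < real k0" using s by auto
    then have j_bounds: "1 \<le> nat j" "nat j < k0" using j by linarith+
    have "(real (nat j) / real a) * w i = s * (m * w i)" for i
      using j j_bounds by (simp add: m_def)
    then have "nat j \<in> K" using all j_bounds by (simp add: K_def)
    then show False using k0_min j_bounds by fastforce
  qed
  ultimately show ?thesis using that by blast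
qed

lemma circle_group_range_winding:
  assumes wint: "\<And>i. i < n \<Longrightarrow> w i \<in> \<int>" and i0: "i0 < n" "w i0 \<noteq> 0"
  shows "circle_group (range (winding n w))"
proof -
  obtain m where m: "m > 0" "\<And>i. i < n \<Longrightarrow> m * w i \<in> \<int>" "primitive_dir n (\<lambda>i. m * w i)"
    using exists_primitive_rescaling[of n w, OF wint i0] by blast
  have "winding n (\<lambda>i. m * w i) t = winding n w (t * m)" for t
    by (simp add: winding_def mult.assoc)
  then have "range (winding n (\<lambda>i. m * w i)) = range (winding n w)"
    using m(1) by (auto simp: image_iff) (metis nonzero_eq_divide_eq order_less_irrefl)
  moreover have "circle_group (range (winding n (\<lambda>i. m * w i)))"
    using m(2,3) by (rule circle_group_range_winding_primitive)
  ultimately show ?thesis by simp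
qed

section \<open>Approximation in \<open>\<real>\<^sup>n\<close>\<close>

definition l1_norm :: "nat \<Rightarrow> (nat \<Rightarrow> real) \<Rightarrow> real" where
  "l1_norm n x = (\<Sum>i<n. \<bar>x i\<bar>)"

lemma l1_norm_nonneg: "0 \<le> l1_norm n x"
  by (simp add: l1_norm_def sum_nonneg)

lemma abs_le_l1_norm: "i < n \<Longrightarrow> \<bar>x i\<bar> \<le> l1_norm n x"
  unfolding l1_norm_def by (rule member_le_sum) auto

lemma l1_norm_triangle: "l1_norm n (\<lambda>i. x i + y i) \<le> l1_norm n x + l1_norm n y"
  unfolding l1_norm_def sum.distrib[symmetric] by (intro sum_mono abs_triangle_ineq)

lemma l1_norm_scale: "l1_norm n (\<lambda>i. c * x i) = \<bar>c\<bar> * l1_norm n x"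
  by (simp add: l1_norm_def abs_mult sum_distrib_left)

lemma l1_norm_tendsto_0:
  assumes "\<And>i. i < n \<Longrightarrow> (\<lambda>k. x k i) \<longlonglongrightarrow> y i"
  shows "(\<lambda>k. l1_norm n (\<lambda>i. x k i - y i)) \<longlonglongrightarrow> 0"
proof -
  have "(\<lambda>k. \<Sum>i<n. \<bar>x k i - y i\<bar>) \<longlonglongrightarrow> (\<Sum>i<n. 0)"
    by (intro tendsto_sum tendsto_rabs_zero LIM_zero assms) auto
  then show ?thesis by (simp add: l1_norm_def)
qed

lemma bounded_seq_convergent_coords:
  fixes u :: "nat \<Rightarrow> nat \<Rightarrow> real"
  assumes "\<And>k i. i < n \<Longrightarrow> \<bar>u k i\<bar> \<le> B"
  obtains r l where "strict_mono r" "\<And>i. i < n \<Longrightarrow> (\<lambda>k. u (r k) i) \<longlonglongrightarrow> l i"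
proof -
  have "\<exists>r l. strict_mono r \<and> (\<forall>i<n. (\<lambda>k. u (r k) i) \<longlonglongrightarrow> l i)"
    using assms
  proof (induction n)
    case 0
    show ?case by (intro exI[of _ id]) (auto simp: strict_mono_def)
  next
    case (Suc n)
    then obtain r l where r: "strict_mono r" and l: "\<forall>i<n. (\<lambda>k. u (r k) i) \<longlonglongrightarrow> l i"
      by force
    have "bounded (range (\<lambda>k. u (r k) n))"
      using Suc.prems by (intro boundedI[of _ B]) auto
    then obtain a s where s: "strict_mono s" and a: "((\<lambda>k. u (r k) n) \<circ> s) \<longlonglongrightarrow> a"
      using bounded_imp_convergent_subsequence by blast
    have "(\<lambda>k. u ((r \<circ> s) k) i) \<longlonglongrightarrow> (l(n := a)) i" if "i < Suc n" for i
    proof (cases "i = n")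
      case False
      then have "((\<lambda>k. u (r k) i) \<circ> s) \<longlonglongrightarrow> l i"
        using l s that by (intro LIMSEQ_subseq_LIMSEQ) auto
      then show ?thesis using False by (simp add: o_def)
    qed (use a in \<open>simp add: o_def\<close>)
    then show ?case using strict_mono_o[OF r s] by blast
  qed
  then show ?thesis using that by blast
qed

lemma floor_multiple_tendsto:
  fixes N :: "nat \<Rightarrow> real"
  assumes "\<And>k. N k > 0" "N \<longlonglongrightarrow> 0"
  shows "(\<lambda>k. of_int \<lfloor>t / N k\<rfloor> * N k) \<longlonglongrightarrow> t"
proof -
  have "\<bar>of_int \<lfloor>t / N k\<rfloor> * N k - t\<bar> \<le> N k" for k
  proof -
    have N: "N k > 0" by (rule assms(1))
    have "of_int \<lfloor>t / N k\<rfloor> * N k \<le> t / N k * N k"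
      using N by (intro mult_right_mono) auto
    moreover have "t / N k * N k < (of_int \<lfloor>t / N k\<rfloor> + 1) * N k"
      using N by (intro mult_strict_right_mono) linarith+
    ultimately have "of_int \<lfloor>t / N k\<rfloor> * N k \<le> t" "t < (of_int \<lfloor>t / N k\<rfloor> + 1) * N k"
      using N by simp_all
    then show ?thesis by (simp add: algebra_simps)
  qed
  then have "(\<lambda>k. of_int \<lfloor>t / N k\<rfloor> * N k - t) \<longlonglongrightarrow> 0"
    using Lim_null_comparison[OF always_eventually, of "\<lambda>k. of_int \<lfloor>t / N k\<rfloor> * N k - t" N]
      assms(2) by simp
  then show ?thesis by (simp add: LIM_zero_iff)
qed


lemma finite_coordinate_net:
  assumes M: "M \<ge> 1" and A: "A \<subseteq> TN"
  obtains N where "finite N" "N \<subseteq> A" "\<And>p. p \<in> A \<Longrightarrow> \<exists>q\<in>N. \<forall>i<n. \<bar>p i - q i\<bar> < 1 / real M"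
proof -
  define cell where "cell p = restrict (\<lambda>i. nat \<lfloor>real M * p i\<rfloor>) {..<n}" for p :: "nat \<Rightarrow> real"
  have cell_in: "cell p \<in> (\<Pi>\<^sub>E i\<in>{..<n}. {..<M})" if "p \<in> A" for p
  proof -
    have "nat \<lfloor>real M * p i\<rfloor> < M" for i
    proof -
      have "real M * p i < real M" using that A M by (auto simp: TN_def T_set_def)
      then have "\<lfloor>real M * p i\<rfloor> < int M" by (simp add: floor_less_iff)
      then show ?thesis using M by (cases "\<lfloor>real M * p i\<rfloor> \<ge> 0") (simp_all add: nat_less_iff)
    qed
    then show ?thesis by (auto simp: cell_def)
  qed
  have close: "\<bar>p i - q i\<bar> < 1 / real M" if "p \<in> A" "q \<in> A" "cell p = cell q" "i < n" for p q i
  proof -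
    have "0 \<le> p i" "0 \<le> q i" using that(1,2) A by (auto simp: TN_def T_set_def)
    then have "0 \<le> \<lfloor>real M * p i\<rfloor>" "0 \<le> \<lfloor>real M * q i\<rfloor>" by simp_all
    moreover have "nat \<lfloor>real M * p i\<rfloor> = nat \<lfloor>real M * q i\<rfloor>"
      using fun_cong[OF that(3), of i] that(4) by (simp add: cell_def)
    ultimately have "\<lfloor>real M * p i\<rfloor> = \<lfloor>real M * q i\<rfloor>" by (metis eq_nat_nat_iff)
    then have "\<bar>real M * p i - real M * q i\<bar> < 1" by linarith
    then have "real M * \<bar>p i - q i\<bar> < 1" by (simp add: abs_mult right_diff_distrib[symmetric])
    then show ?thesis using M by (simp add: less_divide_eq mult.commute)
  qed
  define rep where "rep c = (SOME p. p \<in> A \<and> cell p = c)" for c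
  have rep: "rep (cell p) \<in> A \<and> cell (rep (cell p)) = cell p" if "p \<in> A" for p
    unfolding rep_def by (rule someI[of _ p]) (use that in auto)
  show ?thesis
  proof
    have "cell ` A \<subseteq> (\<Pi>\<^sub>E i\<in>{..<n}. {..<M})" using cell_in by blast
    then have "finite (cell ` A)" by (rule finite_subset) (simp add: finite_PiE)
    then show "finite (rep ` cell ` A)" by blast
    show "rep ` cell ` A \<subseteq> A" using rep by blast
    show "\<exists>q\<in>rep ` cell ` A. \<forall>i<n. \<bar>p i - q i\<bar> < 1 / real M" if "p \<in> A" for p
    proof (intro bexI allI impI)
      show "rep (cell p) \<in> rep ` cell ` A" using that by blast
      show "\<bar>p i - rep (cell p) i\<bar> < 1 / real M" if "i < n" for i
        using close[OF \<open>p \<in> A\<close> _ _ that] rep[OF \<open>p \<in> A\<close>] by simp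
    qed
  qed
qed


text \<open>With \<open>t = \<lfloor>N/K\<rfloor> / N\<^sup>j\<^sup>+\<^sup>1\<close>, the weight \<open>t N\<^sup>l\<close> is an integer for \<open>l > j\<close>, within \<open>1/N\<close> of
  \<open>1/K\<close> for \<open>l = j\<close>, and at most \<open>1/N\<close> for \<open>l < j\<close>.\<close>

lemma digit_weight_close:
  fixes N K j l :: nat
  assumes N: "N \<ge> 1" and K: "K \<ge> 1" and "l \<le> j"
  shows "\<bar>real (N div K) * real N ^ l / real N ^ (j + 1) - (if l = j then 1 / real K else 0)\<bar>
           \<le> 1 / real N"
proof (cases "l = j")
  case True
  have "N div K * K \<le> N" "N < N div K * K + K"
    using div_mult_mod_eq[of N K] mod_less_divisor[of K N] K by linarith+
  then have "real (N div K) * real K \<le> real N" "real N < real (N div K) * real K + real K"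
    by (simp_all only: of_nat_mult[symmetric] of_nat_add[symmetric] of_nat_le_iff of_nat_less_iff)
  moreover have Np: "real N > 0" and Kp: "real K > 0" using N K by simp_all
  ultimately have "real (N div K) / real N \<le> 1 / real K" by (simp add: field_simps)
  moreover have "1 / real K - real (N div K) / real N \<le> 1 / real N"
  proof -
    have "1 / real K - real (N div K) / real N = (real N - real (N div K) * real K) / (real N * real K)"
      using Np Kp by (simp add: field_simps)
    also have "\<dots> \<le> real K / (real N * real K)"
      using \<open>real N < real (N div K) * real K + real K\<close> Np Kp by (intro divide_right_mono) simp_all
    also have "\<dots> = 1 / real N" using Kp by simp
    finally show ?thesis .
  qed
  ultimately have "\<bar>real (N div K) / real N - 1 / real K\<bar> \<le> 1 / real N" by simp
  then show ?thesis using True N by (simp add: power_add)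
next
  case False
  then have "l < j" using assms(3) by simp
  have "real (N div K) * real N ^ l \<le> real N * real N ^ l"
    by (intro mult_right_mono) (simp_all add: div_le_dividend)
  also have "\<dots> \<le> real N ^ j"
    using \<open>l < j\<close> N by (simp add: power_Suc[symmetric] power_increasing del: power_Suc)
  finally show ?thesis using False N by (simp add: divide_le_eq)
qed

lemma digit_weight_Ints:
  fixes N K j l :: nat
  assumes "N \<ge> 1" "j < l"
  shows "real (N div K) * real N ^ l / real N ^ (j + 1) \<in> \<int>"
proof -
  have "l = (j + 1) + (l - j - 1)" using assms(2) by simp
  then have "real N ^ l = real N ^ (j + 1) * real N ^ (l - j - 1)" by (metis power_add)
  then have "real (N div K) * real N ^ l / real N ^ (j + 1) = real (N div K * N ^ (l - j - 1))"
    using assms(1) by simp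
  then show ?thesis by (metis Ints_of_nat)
qed

lemma winding_digits_close:
  fixes Z :: "nat \<Rightarrow> nat \<Rightarrow> real" and K N j r :: nat
  assumes Zint: "\<And>l. l < r \<Longrightarrow> Z l i \<in> \<int>" and j: "j < r" and N: "N \<ge> 1" and K: "K \<ge> 1"
    and i: "i < n"
  shows "dT (winding n (\<lambda>i. \<Sum>l<r. real N ^ l * Z l i) (real (N div K) / real N ^ (j + 1)) i)
            (torus_proj n (\<lambda>i. Z j i / real K) i) \<le> (\<Sum>l<r. \<bar>Z l i\<bar>) / real N"
proof -
  define t where "t = real (N div K) / real N ^ (j + 1)"
  define c where "c l = (if j < l then t * real N ^ l else 0)" for l
  define f where "f l = (if j < l then 0 else t * real N ^ l)" for l
  define g where "g l = f l - (if l = j then 1 / real K else 0)" for l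
  have c_int: "(\<Sum>l<r. c l * Z l i) \<in> \<int>"
  proof (intro Ints_sum Ints_mult)
    fix l assume "l \<in> {..<r}"
    show "Z l i \<in> \<int>" using Zint \<open>l \<in> {..<r}\<close> by simp
    show "c l \<in> \<int>" using digit_weight_Ints[OF N, of j l K] by (simp add: c_def t_def)
  qed
  have "t * (\<Sum>l<r. real N ^ l * Z l i) = (\<Sum>l<r. c l * Z l i) + (\<Sum>l<r. f l * Z l i)"
    by (auto simp: sum_distrib_left sum.distrib[symmetric] c_def f_def intro!: sum.cong)
  moreover have "(\<Sum>l<r. (if l = j then 1 / real K else 0) * Z l i) = Z j i / real K"
    using j by (simp add: if_distrib[of "\<lambda>x. x * _"] cong: if_cong)
  ultimately have "t * (\<Sum>l<r. real N ^ l * Z l i) - Z j i / real K - (\<Sum>l<r. c l * Z l i)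
      = (\<Sum>l<r. g l * Z l i)"
    by (simp add: g_def left_diff_distrib sum_subtractf)
  moreover have "\<bar>g l\<bar> \<le> 1 / real N" for l
    using digit_weight_close[OF N K, of l j] N by (cases "j < l") (simp_all add: g_def f_def t_def)
  then have "\<bar>\<Sum>l<r. g l * Z l i\<bar> \<le> (\<Sum>l<r. \<bar>Z l i\<bar>) / real N"
    by (auto simp: sum_divide_distrib abs_mult
        intro!: order_trans[OF sum_abs] sum_mono mult_right_mono[of _ "1 / real N", simplified])
  ultimately have "\<bar>t * (\<Sum>l<r. real N ^ l * Z l i) - Z j i / real K - (\<Sum>l<r. c l * Z l i)\<bar>
      \<le> (\<Sum>l<r. \<bar>Z l i\<bar>) / real N"
    by simp
  moreover have "dT (winding n (\<lambda>i. \<Sum>l<r. real N ^ l * Z l i) t i) (torus_proj n (\<lambda>i. Z j i / real K) i)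
      \<le> \<bar>t * (\<Sum>l<r. real N ^ l * Z l i) - Z j i / real K - (\<Sum>l<r. c l * Z l i)\<bar>"
    unfolding winding_def by (rule dT_torus_proj_le[OF i c_int])
  ultimately show ?thesis by (simp add: t_def)
qed

section \<open>The projection of a compact connected subgroup to \<open>\<T>\<^sup>n\<close>\<close>

locale CTN_member =
  fixes n :: nat and G :: "(nat \<Rightarrow> real) set"
  assumes G_in_CTN: "G \<in> CTN"
begin

text \<open>\<open>head_lift\<close> is the preimage of the projection \<open>head \<subseteq> \<real>\<^sup>n/\<int>\<^sup>n\<close> in \<open>\<real>\<^sup>n\<close>, a closed
  subgroup; \<open>head_dirs\<close> is the largest linear subspace it contains.\<close>

definition head :: "(nat \<Rightarrow> real) set" where
  "head = proj_init n ` G"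

definition head_lift :: "(nat \<Rightarrow> real) set" where
  "head_lift = {x. torus_proj n x \<in> head}"

definition head_dirs :: "(nat \<Rightarrow> real) set" where
  "head_dirs = {x. \<forall>t. winding n x t \<in> head}"

lemma G_subset_TN: "G \<subseteq> TN"
  and zero_in_G: "TN_zero \<in> G"
  and TN_add_in_G: "x \<in> G \<Longrightarrow> y \<in> G \<Longrightarrow> TN_add x y \<in> G"
  and TN_neg_in_G: "x \<in> G \<Longrightarrow> TN_neg x \<in> G"
  using G_in_CTN by (auto simp: CTN_def is_subgroup_TN_def)

lemma head_eq: "head = torus_proj n ` G"
  using G_subset_TN by (auto simp: head_def proj_init_eq_torus_proj subset_iff image_iff)

lemma torus_proj_in_head: "g \<in> G \<Longrightarrow> torus_proj n g \<in> head"
  by (simp add: head_eq)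

lemma zero_in_head: "TN_zero \<in> head"
  using torus_proj_in_head[OF zero_in_G] torus_proj_zero[of n] by (simp add: TN_zero_def)

lemma TN_add_in_head: "p \<in> head \<Longrightarrow> q \<in> head \<Longrightarrow> TN_add p q \<in> head"
  using G_subset_TN by (auto simp: head_eq torus_proj_TN_add[symmetric] TN_add_in_G subset_iff)

lemma TN_neg_in_head: "p \<in> head \<Longrightarrow> TN_neg p \<in> head"
  using G_subset_TN by (auto simp: head_eq torus_proj_TN_neg[symmetric] TN_neg_in_G subset_iff)

lemma head_lift_add: "x \<in> head_lift \<Longrightarrow> y \<in> head_lift \<Longrightarrow> (\<lambda>i. x i + y i) \<in> head_lift"
  unfolding head_lift_def using TN_add_in_head TN_add_torus_proj by fastforce

lemma head_lift_neg: "x \<in> head_lift \<Longrightarrow> (\<lambda>i. - x i) \<in> head_lift"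
  unfolding head_lift_def using TN_neg_in_head TN_neg_torus_proj by fastforce

lemma head_lift_diff: "x \<in> head_lift \<Longrightarrow> y \<in> head_lift \<Longrightarrow> (\<lambda>i. x i - y i) \<in> head_lift"
  using head_lift_add[OF _ head_lift_neg, of x y] by simp

lemma Ints_in_head_lift: "(\<And>i. i < n \<Longrightarrow> z i \<in> \<int>) \<Longrightarrow> z \<in> head_lift"
  unfolding head_lift_def using torus_proj_Ints zero_in_head by auto

lemma head_lift_of_int_mult: "x \<in> head_lift \<Longrightarrow> (\<lambda>i. of_int k * x i) \<in> head_lift"
proof -
  assume x: "x \<in> head_lift"
  have nat: "(\<lambda>i. real m * x i) \<in> head_lift" for m
  proof (induction m)
    case 0 then show ?case using Ints_in_head_lift[of "\<lambda>i. 0"] by simp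
  next
    case (Suc m)
    then show ?case using head_lift_add[OF Suc x] by (simp add: distrib_right add.commute)
  qed
  show ?thesis
  proof (cases "k \<ge> 0")
    case True then show ?thesis using nat[of "nat k"] by simp
  next
    case False then show ?thesis using head_lift_neg[OF nat[of "nat (- k)"]] by simp
  qed
qed

lemma head_lift_closed:
  assumes x: "\<And>k. x k \<in> head_lift" and lim: "\<And>i. i < n \<Longrightarrow> (\<lambda>k. x k i) \<longlonglongrightarrow> y i"
  shows "y \<in> head_lift"
proof -
  obtain g where g: "\<And>k. g k \<in> G" "\<And>k. torus_proj n (x k) = torus_proj n (g k)"
    using x by (simp add: head_lift_def head_eq image_iff) metis
  have "compactin TN_metric.mtopology G" using G_in_CTN by (simp add: CTN_def TN_top_def)
  then obtain l r where l: "l \<in> G" and r: "strict_mono r"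
    and "limitin TN_metric.mtopology (g \<circ> r) l sequentially"
    unfolding TN_metric.compactin_sequentially using g(1) by blast
  then have dl: "(\<lambda>k. dTN (g (r k)) l) \<longlonglongrightarrow> 0"
    by (simp add: TN_metric.limitin_metric_dist_null o_def)
  have "l i = torus_proj n y i" if i: "i < n" for i
  proof -
    have gi: "g (r k) i = torus_proj n (x (r k)) i" for k
      using g G_subset_TN i by (simp add: torus_proj_TN_coord subset_iff)
    have "dT (l i) (torus_proj n y i) \<le> 2 ^ i * dTN (g (r k)) l + \<bar>x (r k) i - y i\<bar>" for k
    proof -
      have "dT (l i) (torus_proj n y i) \<le> dT (l i) (g (r k) i) + dT (g (r k) i) (torus_proj n y i)"
        by (rule dT_triangle)
      also have "dT (l i) (g (r k) i) = dT (g (r k) i) (l i)" by (rule dT_commute)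
      finally have "dT (l i) (torus_proj n y i) \<le> dT (g (r k) i) (l i) + dT (g (r k) i) (torus_proj n y i)" .
      then show ?thesis
        using dT_le_dTN[of "g (r k)" i l] dT_torus_proj_le_abs[OF i, of "x (r k)" y] by (simp add: gi)
    qed
    moreover have "(\<lambda>k. 2 ^ i * dTN (g (r k)) l + \<bar>x (r k) i - y i\<bar>) \<longlonglongrightarrow> 2 ^ i * 0 + 0"
      using LIMSEQ_subseq_LIMSEQ[OF lim[OF i] r]
      by (intro tendsto_add tendsto_mult_left dl tendsto_rabs_zero LIM_zero) (simp add: o_def)
    ultimately have "dT (l i) (torus_proj n y i) \<le> 0"
      by (intro LIMSEQ_le_const) auto
    moreover have "l i \<in> T_set" "torus_proj n y i \<in> T_set"
      using l G_subset_TN torus_proj_in_TN[of n y] by (auto simp: TN_def)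
    ultimately show ?thesis using dT_nonneg dT_eq_0_iff by (meson order_antisym)
  qed
  then have "torus_proj n y = torus_proj n l"
    by (intro ext) (simp add: torus_proj_def)
  then show ?thesis using torus_proj_in_head[OF l] by (simp add: head_lift_def)
qed

lemma head_dirs_iff: "x \<in> head_dirs \<longleftrightarrow> (\<forall>t. (\<lambda>i. t * x i) \<in> head_lift)"
  by (simp add: head_dirs_def head_lift_def winding_def)

lemma head_dirs_subset_head_lift: "x \<in> head_dirs \<Longrightarrow> x \<in> head_lift"
  using head_dirs_iff[of x] by (metis (no_types) mult_1 ext)

lemma zero_in_head_dirs: "(\<lambda>i. 0) \<in> head_dirs"
  unfolding head_dirs_iff using Ints_in_head_lift[of "\<lambda>i. 0"] by simp

lemma head_dirs_add: "x \<in> head_dirs \<Longrightarrow> y \<in> head_dirs \<Longrightarrow> (\<lambda>i. x i + y i) \<in> head_dirs"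
  unfolding head_dirs_iff using head_lift_add by (simp add: distrib_left)

lemma head_dirs_scale: "x \<in> head_dirs \<Longrightarrow> (\<lambda>i. c * x i) \<in> head_dirs"
  unfolding head_dirs_iff by (simp add: mult.assoc[symmetric])

lemma head_dirs_diff: "x \<in> head_dirs \<Longrightarrow> y \<in> head_dirs \<Longrightarrow> (\<lambda>i. x i - y i) \<in> head_dirs"
  using head_dirs_add[OF _ head_dirs_scale, of x y "-1"] by simp

lemma head_dirs_sum:
  fixes m :: nat
  shows "(\<And>l. l < m \<Longrightarrow> Z l \<in> head_dirs) \<Longrightarrow> (\<lambda>i. \<Sum>l<m. c l * Z l i) \<in> head_dirs"
proof (induction m)
  case 0 then show ?case using zero_in_head_dirs by simp
next
  case (Suc m)
  then show ?case using head_dirs_add[OF Suc.IH head_dirs_scale] by simp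
qed

lemma head_dirs_closed:
  assumes "\<And>k. x k \<in> head_dirs" "\<And>i. i < n \<Longrightarrow> (\<lambda>k. x k i) \<longlonglongrightarrow> y i"
  shows "y \<in> head_dirs"
  unfolding head_dirs_iff
proof
  fix t
  show "(\<lambda>i. t * y i) \<in> head_lift"
    by (rule head_lift_closed[of "\<lambda>k i. t * x k i"]) (use assms head_dirs_iff in \<open>auto intro: tendsto_mult\<close>)
qed

definition dist_dirs :: "(nat \<Rightarrow> real) \<Rightarrow> real" where
  "dist_dirs x = (INF w\<in>head_dirs. l1_norm n (\<lambda>i. x i - w i))"

lemma dist_dirs_le: "w \<in> head_dirs \<Longrightarrow> dist_dirs x \<le> l1_norm n (\<lambda>i. x i - w i)"
  unfolding dist_dirs_def by (rule cINF_lower) (auto intro: bdd_belowI[of _ 0] l1_norm_nonneg)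

lemma dist_dirs_greatest:
  "(\<And>w. w \<in> head_dirs \<Longrightarrow> c \<le> l1_norm n (\<lambda>i. x i - w i)) \<Longrightarrow> c \<le> dist_dirs x"
  unfolding dist_dirs_def by (rule cINF_greatest) (use zero_in_head_dirs in auto)

lemma dist_dirs_nonneg: "0 \<le> dist_dirs x"
  by (rule dist_dirs_greatest) (simp add: l1_norm_nonneg)

lemma dist_dirs_le_l1_norm: "dist_dirs x \<le> l1_norm n x"
  using dist_dirs_le[OF zero_in_head_dirs, of x] by simp

lemma dist_dirs_head_dirs: "u \<in> head_dirs \<Longrightarrow> dist_dirs u = 0"
  using dist_dirs_le[of u u] dist_dirs_nonneg[of u] by (simp add: l1_norm_def)

lemma dist_dirs_lipschitz: "dist_dirs x \<le> dist_dirs y + l1_norm n (\<lambda>i. x i - y i)"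
proof -
  have "dist_dirs x - l1_norm n (\<lambda>i. x i - y i) \<le> dist_dirs y"
  proof (rule dist_dirs_greatest)
    fix w assume "w \<in> head_dirs"
    then have "dist_dirs x \<le> l1_norm n (\<lambda>i. (x i - y i) + (y i - w i))" by (simp add: dist_dirs_le)
    also have "\<dots> \<le> l1_norm n (\<lambda>i. x i - y i) + l1_norm n (\<lambda>i. y i - w i)" by (rule l1_norm_triangle)
    finally show "dist_dirs x - l1_norm n (\<lambda>i. x i - y i) \<le> l1_norm n (\<lambda>i. y i - w i)" by simp
  qed
  then show ?thesis by simp
qed

lemma dist_dirs_diff_head_dirs: "w \<in> head_dirs \<Longrightarrow> dist_dirs (\<lambda>i. x i - w i) = dist_dirs x"
proof (rule antisym)
  assume w: "w \<in> head_dirs"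
  show "dist_dirs (\<lambda>i. x i - w i) \<le> dist_dirs x"
  proof (rule dist_dirs_greatest)
    fix w' assume "w' \<in> head_dirs"
    then have "dist_dirs (\<lambda>i. x i - w i) \<le> l1_norm n (\<lambda>i. (x i - w i) - (w' i - w i))"
      using w by (intro dist_dirs_le head_dirs_diff)
    then show "dist_dirs (\<lambda>i. x i - w i) \<le> l1_norm n (\<lambda>i. x i - w' i)" by simp
  qed
  show "dist_dirs x \<le> dist_dirs (\<lambda>i. x i - w i)"
  proof (rule dist_dirs_greatest)
    fix w' assume "w' \<in> head_dirs"
    then have "dist_dirs x \<le> l1_norm n (\<lambda>i. x i - (w i + w' i))"
      using w by (intro dist_dirs_le head_dirs_add)
    then show "dist_dirs x \<le> l1_norm n (\<lambda>i. x i - w i - w' i)" by (simp add: algebra_simps)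
  qed
qed

lemma dist_dirs_scale_le: "dist_dirs (\<lambda>i. c * x i) \<le> \<bar>c\<bar> * dist_dirs x"
proof (cases "c = 0")
  case True then show ?thesis using dist_dirs_head_dirs[OF zero_in_head_dirs] by simp
next
  case False
  have "dist_dirs (\<lambda>i. c * x i) / \<bar>c\<bar> \<le> dist_dirs x"
  proof (rule dist_dirs_greatest)
    fix w assume "w \<in> head_dirs"
    then have "dist_dirs (\<lambda>i. c * x i) \<le> l1_norm n (\<lambda>i. c * (x i - w i))"
      using dist_dirs_le[OF head_dirs_scale] by (simp add: right_diff_distrib)
    then show "dist_dirs (\<lambda>i. c * x i) / \<bar>c\<bar> \<le> l1_norm n (\<lambda>i. x i - w i)"
      using False by (simp add: l1_norm_scale divide_le_eq mult.commute)
  qed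
  then show ?thesis using False by (simp add: divide_le_eq mult.commute)
qed

lemma dist_dirs_eq_0_imp: "dist_dirs x = 0 \<Longrightarrow> x \<in> head_dirs"
proof -
  assume d: "dist_dirs x = 0"
  have "\<forall>k. \<exists>w. w \<in> head_dirs \<and> l1_norm n (\<lambda>i. x i - w i) < 1 / Suc k"
  proof (rule allI, rule ccontr)
    fix k assume "\<not> (\<exists>w. w \<in> head_dirs \<and> l1_norm n (\<lambda>i. x i - w i) < 1 / Suc k)"
    then have "1 / Suc k \<le> dist_dirs x" by (intro dist_dirs_greatest) force
    then show False using d by simp
  qed
  then obtain w where w: "\<forall>k. w k \<in> head_dirs \<and> l1_norm n (\<lambda>i. x i - w k i) < 1 / Suc k"
    by (rule choice_iff[THEN iffD1, elim_format]) blast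
  show "x \<in> head_dirs"
  proof (rule head_dirs_closed[of w])
    fix i assume i: "i < n"
    have "norm (w k i - x i) \<le> 1 / Suc k" for k
    proof -
      have "\<bar>x i - w k i\<bar> \<le> l1_norm n (\<lambda>i. x i - w k i)" using i by (rule abs_le_l1_norm)
      moreover have "l1_norm n (\<lambda>i. x i - w k i) < 1 / Suc k" using w by blast
      ultimately show ?thesis by (simp add: abs_minus_commute)
    qed
    moreover have "(\<lambda>k. 1 / real (Suc k)) \<longlonglongrightarrow> 0"
      using LIMSEQ_Suc[OF lim_const_over_n[of 1]] by simp
    ultimately have "(\<lambda>k. w k i - x i) \<longlonglongrightarrow> 0"
      using Lim_null_comparison[OF always_eventually, of "\<lambda>k. w k i - x i" "\<lambda>k. 1 / real (Suc k)"]
      by blast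
    then show "(\<lambda>k. w k i) \<longlonglongrightarrow> x i" by (simp add: LIM_zero_iff)
  qed (use w in blast)
qed

text \<open>A closed subgroup of \<open>\<real>\<^sup>n\<close> containing elements \<open>y\<^sub>k \<noteq> 0\<close> of norm \<open>N\<^sub>k \<rightarrow> 0\<close> contains every
  line spanned by a limit of the directions \<open>y\<^sub>k / N\<^sub>k\<close>: integer multiples of \<open>y\<^sub>k\<close> approximate it.\<close>

lemma rescaled_limit_in_head_dirs:
  assumes ys: "\<And>k. ys k \<in> head_lift" and N: "\<And>k. N k > 0" "N \<longlonglongrightarrow> 0"
    and u: "\<And>i. i < n \<Longrightarrow> (\<lambda>k. ys k i / N k) \<longlonglongrightarrow> u i"
  shows "u \<in> head_dirs"
  unfolding head_dirs_iff
proof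
  fix t
  define m where "m k = \<lfloor>t / N k\<rfloor>" for k
  show "(\<lambda>i. t * u i) \<in> head_lift"
  proof (rule head_lift_closed[of "\<lambda>k i. of_int (m k) * ys k i"])
    show "(\<lambda>i. of_int (m k) * ys k i) \<in> head_lift" for k by (intro head_lift_of_int_mult ys)
    fix i assume "i < n"
    have "(\<lambda>k. (of_int (m k) * N k) * (ys k i / N k)) \<longlonglongrightarrow> t * u i"
      unfolding m_def by (intro tendsto_mult floor_multiple_tendsto N u \<open>i < n\<close>)
    moreover have "(of_int (m k) * N k) * (ys k i / N k) = of_int (m k) * ys k i" for k
      using N(1)[of k] by simp
    ultimately show "(\<lambda>k. of_int (m k) * ys k i) \<longlonglongrightarrow> t * u i" by simp
  qed
qed

lemma exists_near_best_in_coset: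
  assumes "x \<in> head_lift" "x \<notin> head_dirs"
  obtains y where "y \<in> head_lift" "dist_dirs y = dist_dirs x" "0 < l1_norm n y"
    "l1_norm n y < 2 * dist_dirs x"
proof -
  have d: "dist_dirs x > 0"
    using dist_dirs_nonneg[of x] dist_dirs_eq_0_imp[of x] assms(2) by linarith
  have "\<exists>w. w \<in> head_dirs \<and> l1_norm n (\<lambda>i. x i - w i) < 2 * dist_dirs x"
  proof (rule ccontr)
    assume "\<not> ?thesis"
    then have "2 * dist_dirs x \<le> dist_dirs x" by (intro dist_dirs_greatest) force
    then show False using d by simp
  qed
  then obtain w where w: "w \<in> head_dirs" "l1_norm n (\<lambda>i. x i - w i) < 2 * dist_dirs x"
    by blast
  have "dist_dirs (\<lambda>i. x i - w i) = dist_dirs x" by (rule dist_dirs_diff_head_dirs[OF w(1)])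
  moreover have "0 < l1_norm n (\<lambda>i. x i - w i)"
    using dist_dirs_le_l1_norm[of "\<lambda>i. x i - w i"] calculation d by linarith
  moreover have "(\<lambda>i. x i - w i) \<in> head_lift"
    by (rule head_lift_diff[OF assms(1) head_dirs_subset_head_lift[OF w(1)]])
  ultimately show ?thesis using that w(2) by blast
qed

text \<open>Normalising \<open>y\<^sub>k\<close> to \<open>l1\<close>-norm \<open>1\<close>, a subsequence converges to a direction \<open>u\<close>, which lies
  in \<open>head_dirs\<close>; so the normalised \<open>y\<^sub>k\<close> cannot all keep distance \<open>1/2\<close> from \<open>head_dirs\<close>.\<close>

lemma short_head_lift_near_head_dirs:
  assumes ys: "\<And>k. ys k \<in> head_lift" and pos: "\<And>k. 0 < l1_norm n (ys k)"
    and small: "(\<lambda>k. l1_norm n (ys k)) \<longlonglongrightarrow> 0"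
  shows "\<exists>k. 2 * dist_dirs (ys k) \<le> l1_norm n (ys k)"
proof (rule ccontr)
  assume "\<not> ?thesis"
  then have far: "l1_norm n (ys k) < 2 * dist_dirs (ys k)" for k by (simp add: not_le)
  define N where "N k = l1_norm n (ys k)" for k
  define us where "us k = (\<lambda>i. ys k i / N k)" for k
  have N_pos: "N k > 0" for k using pos by (simp add: N_def)
  have us_bounded: "\<bar>us k i\<bar> \<le> 1" if "i < n" for k i
    using abs_le_l1_norm[OF that, of "ys k"] N_pos[of k] by (simp add: us_def N_def)
  have us_far: "1/2 < dist_dirs (us k)" for k
  proof -
    have "dist_dirs (ys k) \<le> N k * dist_dirs (us k)"
      using dist_dirs_scale_le[of "N k" "us k"] N_pos[of k] by (simp add: us_def)
    then have "N k * 1 < N k * (2 * dist_dirs (us k))" using far[of k] by (simp add: N_def)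
    then have "1 < 2 * dist_dirs (us k)" using mult_less_cancel_left_pos[OF N_pos[of k]] by blast
    then show ?thesis by simp
  qed
  obtain r u where r: "strict_mono r" and u: "\<And>i. i < n \<Longrightarrow> (\<lambda>k. us (r k) i) \<longlonglongrightarrow> u i"
    using bounded_seq_convergent_coords[of n us 1] us_bounded by blast
  have "(\<lambda>k. N (r k)) \<longlonglongrightarrow> 0"
    using LIMSEQ_subseq_LIMSEQ[OF small r] by (simp add: N_def o_def)
  then have "u \<in> head_dirs"
    using u ys N_pos by (intro rescaled_limit_in_head_dirs[of "ys \<circ> r" "N \<circ> r"]) (auto simp: us_def o_def)
  then have "1/2 \<le> l1_norm n (\<lambda>i. us (r k) i - u i)" for k
    using dist_dirs_lipschitz[of "us (r k)" u] dist_dirs_head_dirs us_far[of "r k"] by simp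
  moreover have "(\<lambda>k. l1_norm n (\<lambda>i. us (r k) i - u i)) \<longlonglongrightarrow> 0"
    by (rule l1_norm_tendsto_0) (rule u)
  ultimately have "1/2 \<le> (0::real)"
    by (intro LIMSEQ_le_const) auto
  then show False by simp
qed

text \<open>Hence \<open>head_lift\<close> is \<open>head_dirs\<close> plus a discrete set.\<close>

lemma small_head_lift_in_head_dirs:
  "\<exists>\<delta>>0. \<forall>x\<in>head_lift. l1_norm n x < \<delta> \<longrightarrow> x \<in> head_dirs"
proof (rule ccontr)
  assume "\<not> ?thesis"
  then have "\<forall>k. \<exists>x. x \<in> head_lift \<and> l1_norm n x < 1 / Suc k \<and> x \<notin> head_dirs"
    by (metis of_nat_Suc zero_less_divide_1_iff of_nat_0_less_iff zero_less_Suc)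
  then obtain xs where xs: "\<And>k. xs k \<in> head_lift" "\<And>k. l1_norm n (xs k) < 1 / Suc k"
    "\<And>k. xs k \<notin> head_dirs"
    by metis
  have "\<forall>k. \<exists>y. y \<in> head_lift \<and> dist_dirs y = dist_dirs (xs k) \<and> 0 < l1_norm n y \<and>
      l1_norm n y < 2 * dist_dirs (xs k)"
    using exists_near_best_in_coset[OF xs(1,3)] by metis
  then obtain ys where "\<forall>k. ys k \<in> head_lift \<and> dist_dirs (ys k) = dist_dirs (xs k) \<and>
      0 < l1_norm n (ys k) \<and> l1_norm n (ys k) < 2 * dist_dirs (xs k)"
    by (rule choice_iff[THEN iffD1, elim_format]) blast
  then have ys: "\<And>k. ys k \<in> head_lift" "\<And>k. 0 < l1_norm n (ys k)"
    "\<And>k. l1_norm n (ys k) < 2 * dist_dirs (ys k)" "\<And>k. dist_dirs (ys k) \<le> l1_norm n (xs k)"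
    using dist_dirs_le_l1_norm by auto
  have "(\<lambda>k. l1_norm n (ys k)) \<longlonglongrightarrow> 0"
  proof (rule Lim_null_comparison[OF always_eventually])
    show "\<forall>k. norm (l1_norm n (ys k)) \<le> 2 / Suc k"
    proof
      fix k
      show "norm (l1_norm n (ys k)) \<le> 2 / Suc k" using ys(2-4)[of k] xs(2)[of k] by simp
    qed
    show "(\<lambda>k. 2 / real (Suc k)) \<longlonglongrightarrow> 0"
      using LIMSEQ_Suc[OF lim_const_over_n[of 2]] by simp
  qed
  then obtain k where "2 * dist_dirs (ys k) \<le> l1_norm n (ys k)"
    using short_head_lift_near_head_dirs[of ys, OF ys(1,2)] by blast
  then show False using ys(3)[of k] by simp
qed

lemma torus_proj_head_dirs_subset_head: "torus_proj n ` head_dirs \<subseteq> head"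
proof
  fix p assume "p \<in> torus_proj n ` head_dirs"
  then obtain w where w: "w \<in> head_dirs" "p = winding n w 1" by (auto simp: winding_def)
  then show "p \<in> head" by (simp add: head_dirs_def)
qed

text \<open>The difference of two nearby points of \<open>G\<close> lifts to a short vector of \<open>head_lift\<close>,
  which by \<open>small_head_lift_in_head_dirs\<close> lies in \<open>head_dirs\<close>.\<close>

lemma torus_proj_head_dirs_near:
  assumes \<delta>: "\<forall>x\<in>head_lift. l1_norm n x < \<delta> \<longrightarrow> x \<in> head_dirs"
    and g: "g \<in> G" and h: "h \<in> G" and gh: "real n * 2 ^ n * dTN g h < \<delta>"
    and "torus_proj n h \<in> torus_proj n ` head_dirs"
  shows "torus_proj n g \<in> torus_proj n ` head_dirs"
proof -
  obtain w where w: "w \<in> head_dirs" "torus_proj n h = torus_proj n w" using assms(5) by blast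
  define c where "c = (\<lambda>i. (g i - h i) - of_int (round (g i - h i)))"
  have "l1_norm n c \<le> (\<Sum>i<n. 2 ^ n * dTN g h)"
    unfolding l1_norm_def
  proof (rule sum_mono)
    fix i assume "i \<in> {..<n}"
    then have "(2::real) ^ i \<le> 2 ^ n" by (intro power_increasing) auto
    then have "2 ^ i * dTN g h \<le> 2 ^ n * dTN g h" by (intro mult_right_mono dTN_nonneg)
    then show "\<bar>c i\<bar> \<le> 2 ^ n * dTN g h"
      using dT_le_dTN[of g i h] by (simp add: c_def dT_def)
  qed
  then have "l1_norm n c < \<delta>" using gh by simp
  moreover have "c \<in> head_lift"
  proof -
    have "torus_proj n c = torus_proj n (\<lambda>i. g i + - h i)"
      using torus_proj_add_Ints[of n "\<lambda>i. - of_int (round (g i - h i))" "\<lambda>i. g i - h i"]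
      by (simp add: c_def)
    also have "\<dots> = TN_add (torus_proj n g) (TN_neg (torus_proj n h))"
      by (simp add: TN_add_torus_proj TN_neg_torus_proj)
    finally show ?thesis
      using g h by (simp add: head_lift_def TN_add_in_head TN_neg_in_head torus_proj_in_head)
  qed
  ultimately have c: "c \<in> head_dirs" using \<delta> by blast
  have "torus_proj n g = torus_proj n (\<lambda>i. (h i + c i) + of_int (round (g i - h i)))"
    by (rule torus_proj_cong) (simp add: c_def)
  also have "\<dots> = TN_add (torus_proj n h) (torus_proj n c)"
    by (simp add: torus_proj_add_Ints TN_add_torus_proj)
  also have "\<dots> = torus_proj n (\<lambda>i. w i + c i)" using w by (simp add: TN_add_torus_proj)
  finally show ?thesis using head_dirs_add[OF w(1) c] by blast
qed

text \<open>The points of \<open>G\<close> whose projection lies on the subtorus \<open>torus_proj n ` head_dirs\<close> form a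
  relatively clopen subset containing \<open>0\<close>, so by connectedness they exhaust \<open>G\<close>.\<close>

lemma head_eq_torus_proj_head_dirs: "head = torus_proj n ` head_dirs"
proof
  obtain \<delta> where \<delta>: "\<delta> > 0" "\<forall>x\<in>head_lift. l1_norm n x < \<delta> \<longrightarrow> x \<in> head_dirs"
    using small_head_lift_in_head_dirs by blast
  define \<rho> where "\<rho> = \<delta> / (real n * 2 ^ n + 1)"
  have \<rho>: "\<rho> > 0" using \<delta>(1) by (simp add: \<rho>_def add_nonneg_pos)
  have near: "torus_proj n g \<in> torus_proj n ` head_dirs"
    if "g \<in> G" "h \<in> G" "dTN g h < \<rho>" "torus_proj n h \<in> torus_proj n ` head_dirs" for g h
  proof (rule torus_proj_head_dirs_near[OF \<delta>(2) that(1,2) _ that(4)])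
    have "real n * 2 ^ n * dTN g h \<le> (real n * 2 ^ n + 1) * dTN g h"
      using dTN_nonneg[of g h] by (intro mult_right_mono) auto
    also have "\<dots> < \<delta>"
      using that(3) by (simp add: \<rho>_def pos_less_divide_eq mult.commute add_nonneg_pos)
    finally show "real n * 2 ^ n * dTN g h < \<delta>" .
  qed
  have "\<forall>g\<in>G. torus_proj n g \<in> torus_proj n ` head_dirs"
  proof (rule connectedin_TN_locally_constant)
    show "connectedin TN_top G" using G_in_CTN by (simp add: CTN_def)
    show "torus_proj n TN_zero \<in> torus_proj n ` head_dirs"
      using torus_proj_zero[of n] zero_in_head_dirs unfolding TN_zero_def by (metis image_eqI)
  qed (use G_subset_TN \<rho> near zero_in_G in auto)
  then show "head \<subseteq> torus_proj n ` head_dirs" unfolding head_eq by blast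
qed (rule torus_proj_head_dirs_subset_head)

text \<open>Dirichlet's simultaneous approximation gives \<open>q w \<approx> p\<close> with \<open>p\<close> integral; the error
  \<open>q w - p\<close> is a short element of \<open>head_lift\<close>, hence in \<open>head_dirs\<close>, so \<open>p \<in> head_dirs\<close>.\<close>

lemma head_dirs_rational_approx:
  assumes w: "w \<in> head_dirs" and e: "e > 0"
  obtains Z and K :: nat where "\<And>i. i < n \<Longrightarrow> Z i \<in> \<int>" "Z \<in> head_dirs" "K \<ge> 1"
    "\<And>i. i < n \<Longrightarrow> \<bar>w i - Z i / real K\<bar> < e"
proof -
  obtain \<delta> where \<delta>: "\<delta> > 0" "\<forall>x\<in>head_lift. l1_norm n x < \<delta> \<longrightarrow> x \<in> head_dirs"
    using small_head_lift_in_head_dirs by blast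
  obtain M :: nat where M_pos: "M > 0" and M: "inverse (real M) < min e (\<delta> / (real n + 1))"
    using ex_inverse_of_nat_less[of "min e (\<delta> / (real n + 1))"] e \<delta>(1) by auto
  then have Me: "1 / real M < e" and "(real n + 1) / real M < \<delta>"
    by (simp_all add: inverse_eq_divide field_simps)
  then have Mn: "real n * (1 / real M) < \<delta>"
    using M_pos by (simp add: field_simps)
  obtain q p where q: "0 < q" and p: "\<And>i. i < n \<Longrightarrow> \<bar>of_int q * w i - of_int (p i)\<bar> < 1 / real M"
    using Dirichlet_approx_simult[OF M_pos, where \<theta> = w and n = n] by blast
  define Z where "Z i = (if i < n then real_of_int (p i) else 0)" for i
  define err where "err i = of_int q * w i - Z i" for i
  have "err \<in> head_lift"
    unfolding err_def
    by (rule head_lift_diff[OF head_dirs_subset_head_lift[OF head_dirs_scale[OF w]] Ints_in_head_lift])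
      (simp add: Z_def)
  moreover have "l1_norm n err < \<delta>"
  proof -
    have "l1_norm n err \<le> (\<Sum>i<n. 1 / real M)"
      unfolding l1_norm_def using p by (intro sum_mono) (simp add: err_def Z_def less_imp_le)
    then show ?thesis using Mn by simp
  qed
  ultimately have "err \<in> head_dirs" using \<delta>(2) by blast
  then have "(\<lambda>i. of_int q * w i - err i) \<in> head_dirs"
    by (rule head_dirs_diff[OF head_dirs_scale[OF w]])
  moreover have "(\<lambda>i. of_int q * w i - err i) = Z" by (simp add: err_def)
  ultimately have "Z \<in> head_dirs" by simp
  moreover have "\<bar>w i - Z i / real (nat q)\<bar> < e" if "i < n" for i
  proof -
    have "\<bar>w i - Z i / real (nat q)\<bar> = \<bar>err i\<bar> / of_int q" using q by (simp add: err_def field_simps)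
    also have "\<dots> \<le> \<bar>err i\<bar>"
    proof -
      have "(1::real) \<le> of_int q" using q by simp
      then show ?thesis using q by (simp add: divide_le_eq mult_le_cancel_left1)
    qed
    also have "\<dots> < e" using p[OF that] Me by (simp add: err_def Z_def that)
    finally show ?thesis .
  qed
  ultimately show ?thesis using that[of Z "nat q"] q by (simp add: Z_def)
qed


section \<open>Approximating the projection by one circle\<close>

lemma head_subset_TN: "head \<subseteq> TN"
  by (auto simp: head_eq torus_proj_in_TN)

lemma head_point_rational_approx:
  assumes q: "q \<in> head" and e: "e > 0"
  shows "\<exists>Z (K::nat). (\<forall>i<n. Z i \<in> \<int>) \<and> Z \<in> head_dirs \<and> K \<ge> 1 \<and>
           (\<forall>i<n. dT (q i) (torus_proj n (\<lambda>i. Z i / real K) i) < e)"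
proof -
  have "q \<in> torus_proj n ` head_dirs"
    using q by (simp only: head_eq_torus_proj_head_dirs)
  then obtain w where w: "w \<in> head_dirs" "q = torus_proj n w" by blast
  obtain Z and K :: nat where ZK: "\<And>i. i < n \<Longrightarrow> Z i \<in> \<int>" "Z \<in> head_dirs" "K \<ge> 1"
    "\<And>i. i < n \<Longrightarrow> \<bar>w i - Z i / real K\<bar> < e"
    by (rule head_dirs_rational_approx[OF w(1) e]) blast
  have "dT (q i) (torus_proj n (\<lambda>i. Z i / real K) i) < e" if "i < n" for i
    using order_le_less_trans[OF dT_torus_proj_le_abs[OF that, of w "\<lambda>i. Z i / real K"] ZK(4)[OF that]] w(2) by simp
  then show ?thesis using ZK by blast
qed

lemma head_rational_net:
  assumes e: "e > 0"
  obtains r Z and K :: "nat \<Rightarrow> nat"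
  where "\<And>l i. l < r \<Longrightarrow> i < n \<Longrightarrow> Z l i \<in> \<int>" "\<And>l. l < r \<Longrightarrow> Z l \<in> head_dirs"
    "\<And>l. l < r \<Longrightarrow> K l \<ge> 1"
    "\<And>p. p \<in> head \<Longrightarrow> \<exists>j<r. \<forall>i<n. dT (p i) (torus_proj n (\<lambda>i. Z j i / real (K j)) i) < e"
proof -
  obtain M :: nat where "M > 0" and M: "inverse (real M) < e / 2"
    using ex_inverse_of_nat_less[of "e / 2"] e by auto
  then have M1: "M \<ge> 1" and Me: "1 / real M < e / 2" by (simp_all add: inverse_eq_divide)
  obtain Nt where Nt: "finite Nt" "Nt \<subseteq> head"
    "\<And>p. p \<in> head \<Longrightarrow> \<exists>q\<in>Nt. \<forall>i<n. \<bar>p i - q i\<bar> < 1 / real M"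
    using finite_coordinate_net[OF M1 head_subset_TN] by blast
  obtain xs where xs: "set xs = Nt" using finite_list[OF Nt(1)] by blast
  define good where "good q Z K \<longleftrightarrow> (\<forall>i<n. Z i \<in> \<int>) \<and> Z \<in> head_dirs \<and> K \<ge> 1 \<and>
      (\<forall>i<n. dT (q i) (torus_proj n (\<lambda>i. Z i / real K) i) < e / 2)" for q Z and K :: nat
  have "\<forall>l. \<exists>ZK. l < length xs \<longrightarrow> good (xs ! l) (fst ZK) (snd ZK)"
  proof
    fix l
    show "\<exists>ZK. l < length xs \<longrightarrow> good (xs ! l) (fst ZK) (snd ZK)"
    proof (cases "l < length xs")
      case True
      then have "xs ! l \<in> head" using xs Nt(2) nth_mem by blast
      then obtain Z and K :: nat where "good (xs ! l) Z K"
        using head_point_rational_approx[OF _ half_gt_zero[OF e]] unfolding good_def by blast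
      then show ?thesis by (intro exI[of _ "(Z, K)"]) simp
    qed simp
  qed
  then obtain ZK where ZK_all: "\<forall>l. l < length xs \<longrightarrow> good (xs ! l) (fst (ZK l)) (snd (ZK l))"
    by (rule choice_iff[THEN iffD1, elim_format]) blast
  then have ZK: "\<And>l. l < length xs \<Longrightarrow> good (xs ! l) (fst (ZK l)) (snd (ZK l))" by blast
  show ?thesis
  proof (rule that[of "length xs" "fst \<circ> ZK" "snd \<circ> ZK"])
    fix p assume "p \<in> head"
    then obtain q where q: "q \<in> Nt" "\<forall>i<n. \<bar>p i - q i\<bar> < 1 / real M" using Nt(3) by blast
    then obtain j where j: "j < length xs" "xs ! j = q" using xs by (auto simp: in_set_conv_nth)
    have "dT (p i) (torus_proj n (\<lambda>i. (fst \<circ> ZK) j i / real ((snd \<circ> ZK) j)) i) < e" if "i < n" for i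
    proof -
      have "dT (p i) (q i) < e / 2" using q(2) that dT_le_abs[of "p i" "q i"] Me by fastforce
      moreover have "dT (q i) (torus_proj n (\<lambda>i. fst (ZK j) i / real (snd (ZK j))) i) < e / 2"
        using ZK[OF j(1)] that j(2) by (simp add: good_def)
      ultimately show ?thesis
        using dT_triangle[of "p i" "torus_proj n (\<lambda>i. fst (ZK j) i / real (snd (ZK j))) i" "q i"]
        by simp
    qed
    then show "\<exists>j<length xs. \<forall>i<n. dT (p i) (torus_proj n (\<lambda>i. (fst \<circ> ZK) j i / real ((snd \<circ> ZK) j)) i) < e"
      using j(1) by blast
  qed (use ZK in \<open>auto simp: good_def\<close>)
qed

text \<open>The rational points \<open>Z\<^sub>l / K\<^sub>l\<close> of a net are merged into the single integer direction
  \<open>w = \<Sum>\<^sub>l N\<^sup>l Z\<^sub>l\<close>: for \<open>N\<close> large, \<open>winding n w\<close> passes near each of them.\<close>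

lemma winding_approximates_head:
  assumes e: "e > 0"
  obtains w where "\<And>i. i < n \<Longrightarrow> w i \<in> \<int>" "w \<in> head_dirs"
    "\<And>p. p \<in> head \<Longrightarrow> \<exists>t. \<forall>i<n. dT (p i) (winding n w t i) \<le> e"
proof -
  obtain r Z and K :: "nat \<Rightarrow> nat" where Z: "\<And>l i. l < r \<Longrightarrow> i < n \<Longrightarrow> Z l i \<in> \<int>"
    "\<And>l. l < r \<Longrightarrow> Z l \<in> head_dirs" and K: "\<And>l. l < r \<Longrightarrow> K l \<ge> 1"
    and net: "\<And>p. p \<in> head \<Longrightarrow> \<exists>j<r. \<forall>i<n. dT (p i) (torus_proj n (\<lambda>i. Z j i / real (K j)) i) < e / 2"
    using head_rational_net[OF half_gt_zero[OF e]] by blast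
  define B where "B = (\<Sum>l<r. \<Sum>i<n. \<bar>Z l i\<bar>)"
  obtain N :: nat where "max (2 * B / e) 1 < real N" using reals_Archimedean2 by blast
  then have N: "2 * B / e < real N" "N \<ge> 1" by simp_all
  have BN: "B / real N \<le> e / 2"
    using N e by (simp add: field_simps)
  define w where "w i = (\<Sum>l<r. real N ^ l * Z l i)" for i
  show ?thesis
  proof (rule that[of w])
    show "w i \<in> \<int>" if "i < n" for i unfolding w_def using Z(1) that by (intro Ints_sum Ints_mult) auto
    show "w \<in> head_dirs" unfolding w_def using Z(2) by (rule head_dirs_sum)
    fix p assume "p \<in> head"
    then obtain j where j: "j < r" and pj: "\<forall>i<n. dT (p i) (torus_proj n (\<lambda>i. Z j i / real (K j)) i) < e / 2"
      using net by blast
    define t where "t = real (N div K j) / real N ^ (j + 1)"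
    have "dT (p i) (winding n w t i) \<le> e" if i: "i < n" for i
    proof -
      have "dT (winding n w t i) (torus_proj n (\<lambda>i. Z j i / real (K j)) i) \<le> (\<Sum>l<r. \<bar>Z l i\<bar>) / real N"
        unfolding t_def w_def using Z(1) i by (intro winding_digits_close j N(2) K) auto
      also have "\<dots> \<le> B / real N"
        unfolding B_def using N(2) i by (intro divide_right_mono sum_mono member_le_sum) auto
      finally have "dT (winding n w t i) (torus_proj n (\<lambda>i. Z j i / real (K j)) i) \<le> e / 2"
        using BN by linarith
      then have "dT (torus_proj n (\<lambda>i. Z j i / real (K j)) i) (winding n w t i) \<le> e / 2"
        by (subst dT_commute)
      moreover have "dT (p i) (torus_proj n (\<lambda>i. Z j i / real (K j)) i) < e / 2" using pj i by blast
      ultimately show ?thesis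
        using dT_triangle[of "p i" "winding n w t i" "torus_proj n (\<lambda>i. Z j i / real (K j)) i"]
        by linarith
    qed
    then show "\<exists>t. \<forall>i<n. dT (p i) (winding n w t i) \<le> e" by blast
  qed
qed


lemma dH_range_winding_le:
  assumes w: "w \<in> head_dirs" and e: "0 \<le> e"
    and approx: "\<And>p. p \<in> head \<Longrightarrow> \<exists>t. \<forall>i<n. dT (p i) (winding n w t i) \<le> e"
  shows "dH G (range (winding n w)) \<le> 2 * e + 1 / 2 ^ n"
proof (rule dH_leI)
  show "G \<noteq> {}" using zero_in_G by blast
  show "range (winding n w) \<noteq> {}" by simp
  fix a assume a: "a \<in> G"
  then obtain t where t: "\<forall>i<n. dT (torus_proj n a i) (winding n w t i) \<le> e"
    using approx torus_proj_in_head by blast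
  have "dTN a (winding n w t) \<le> 2 * e + 1 / 2 ^ n"
    using t a G_subset_TN e by (intro dTN_le_of_head_le) (auto simp: torus_proj_TN_coord)
  then show "\<exists>b\<in>range (winding n w). dTN a b \<le> 2 * e + 1 / 2 ^ n" by blast
next
  fix b assume "b \<in> range (winding n w)"
  then have "b \<in> head" using w by (auto simp: head_dirs_def)
  then obtain a where a: "a \<in> G" "b = torus_proj n a" by (auto simp: head_eq)
  have "dTN a b \<le> 2 * 0 + 1 / 2 ^ n"
    using a G_subset_TN by (intro dTN_le_of_head_le) (auto simp: torus_proj_TN_coord)
  then show "\<exists>a\<in>G. dTN a b \<le> 2 * e + 1 / 2 ^ n" using a(1) e by force
qed

lemma approximating_winding_nonzero:
  assumes nontrivial: "head \<noteq> {TN_zero}" and e: "e < 1/2"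
    and approx: "\<And>p. p \<in> head \<Longrightarrow> \<exists>t. \<forall>i<n. dT (p i) (winding n w t i) \<le> e"
  shows "\<exists>i<n. w i \<noteq> 0"
proof (rule ccontr)
  assume "\<not> (\<exists>i<n. w i \<noteq> 0)"
  then have w0: "winding n w t i = 0" for t i by (simp add: winding_def torus_proj_def)
  obtain p where "p \<in> head" "p \<noteq> TN_zero" using nontrivial zero_in_head by blast
  then obtain v where v: "v \<in> head_dirs" "torus_proj n v \<noteq> TN_zero"
    using head_eq_torus_proj_head_dirs by auto
  then obtain i where i: "i < n" "v i \<noteq> 0"
    by (metis torus_proj_Ints Ints_0)
  define q where "q = winding n v (1 / (2 * v i))"
  have "q \<in> head" using v(1) by (simp add: head_dirs_def q_def)
  then obtain t where "dT (q i) (winding n w t i) \<le> e" using approx i by blast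
  moreover have "q i = 1/2" using i by (simp add: q_def winding_def torus_proj_def)
  ultimately have "1/2 \<le> e" using w0 dT_half_0 by simp
  then show False using e by simp
qed

lemma dH_trivial_head:
  assumes n: "n \<ge> 1" and trivial: "head = {TN_zero}"
  defines "w \<equiv> \<lambda>i. if i = n - 1 then 1 else 0 :: real"
  shows "dH G (range (winding n w)) \<le> 1 / 2 ^ (n - 1)"
proof (rule dH_leI)
  show "G \<noteq> {}" using zero_in_G by blast
  show "range (winding n w) \<noteq> {}" by simp
  have half: "1 / 2 ^ n \<le> (1::real) / 2 ^ (n - 1)" using n by (cases n) (auto simp: field_simps)
  fix a assume a: "a \<in> G"
  then have a0: "torus_proj n a = TN_zero" using trivial torus_proj_in_head by blast
  have "a i = 0" if "i < n" for i
    using torus_proj_TN_coord[of a i n] fun_cong[OF a0, of i] a G_subset_TN that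
    by (auto simp: TN_zero_def)
  then have "dTN a (winding n w 0) \<le> 2 * 0 + 1 / 2 ^ n"
    by (intro dTN_le_of_head_le) (simp_all add: winding_0 TN_zero_def)
  then show "\<exists>b\<in>range (winding n w). dTN a b \<le> 1 / 2 ^ (n - 1)"
    using half by (intro bexI[of _ "winding n w 0"]) auto
next
  fix b assume "b \<in> range (winding n w)"
  then obtain t where b: "b = winding n w t" by blast
  have "(\<Sum>i<n. dT (TN_zero i) (b i) / 2 ^ i) = dT 0 (b (n - 1)) / 2 ^ (n - 1)"
    using n by (subst sum.mono_neutral_right[of "{..<n}" "{n - 1}"])
      (auto simp: b winding_def torus_proj_def w_def TN_zero_def)
  also have "\<dots> \<le> (1/2) / 2 ^ (n - 1)" by (intro divide_right_mono dT_le_half) simp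
  finally have "dTN TN_zero b \<le> (1/2) / 2 ^ (n - 1) + 1 / 2 ^ n"
    using dTN_le_head_plus_tail[of TN_zero b n] by linarith
  also have "\<dots> = 1 / 2 ^ (n - 1)" using n by (cases n) (auto simp: field_simps)
  finally show "\<exists>a\<in>G. dTN a b \<le> 1 / 2 ^ (n - 1)" using zero_in_G by blast
qed

lemma exists_circle_near:
  assumes n: "n \<ge> 1"
  obtains w where "\<And>i. i < n \<Longrightarrow> w i \<in> \<int>" "\<exists>i<n. w i \<noteq> 0"
    "dH G (range (winding n w)) \<le> 1 / 2 ^ (n - 1)"
proof (cases "head = {TN_zero}")
  case True
  define w where "w = (\<lambda>i. if i = n - 1 then 1 else 0 :: real)"
  have "\<And>i. i < n \<Longrightarrow> w i \<in> \<int>" by (simp add: w_def)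
  moreover have "\<exists>i<n. w i \<noteq> 0" using n by (intro exI[of _ "n - 1"]) (simp add: w_def)
  moreover have "dH G (range (winding n w)) \<le> 1 / 2 ^ (n - 1)"
    unfolding w_def by (rule dH_trivial_head[OF n True])
  ultimately show ?thesis by (rule that)
next
  case False
  define e :: real where "e = 1 / 2 ^ (n + 2)"
  have "e > 0" by (simp add: e_def)
  then obtain w where w: "\<And>i. i < n \<Longrightarrow> w i \<in> \<int>" "w \<in> head_dirs"
    and approx: "\<And>p. p \<in> head \<Longrightarrow> \<exists>t. \<forall>i<n. dT (p i) (winding n w t i) \<le> e"
    by (rule winding_approximates_head) blast
  obtain m where m: "n = Suc m" using n by (cases n) auto
  have four: "(1::real) < 4 * 2 ^ m" using one_le_power[of "2::real" m] by linarith
  have e_small: "e < 1/2" and bound: "2 * e + 1 / 2 ^ n \<le> 1 / 2 ^ (n - 1)"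
    by (simp_all add: e_def m field_simps four)
  have "\<exists>i<n. w i \<noteq> 0" by (rule approximating_winding_nonzero[OF False e_small approx])
  moreover have "dH G (range (winding n w)) \<le> 2 * e + 1 / 2 ^ n"
    by (rule dH_range_winding_le[OF w(2) _ approx]) (simp add: e_def)
  ultimately show ?thesis using bound by (intro that[OF w(1)]) auto
qed

end

theorem lemma3p6:
  fixes n :: nat
  assumes "n \<ge> 1"
  shows "\<forall>G\<in>CTN. \<exists>F\<in>CTN. circle_group (proj_init n ` F) \<and> proj_tail n ` F = {TN_zero}
            \<and> dH G F \<le> 1 / 2 ^ (n - 1)"
proof
  fix G assume "G \<in> CTN"
  then interpret CTN_member n G by unfold_locales
  obtain w where w: "\<And>i. i < n \<Longrightarrow> w i \<in> \<int>" "\<exists>i<n. w i \<noteq> 0"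
    and near: "dH G (range (winding n w)) \<le> 1 / 2 ^ (n - 1)"
    using exists_circle_near[OF assms] by blast
  show "\<exists>F\<in>CTN. circle_group (proj_init n ` F) \<and> proj_tail n ` F = {TN_zero}
            \<and> dH G F \<le> 1 / 2 ^ (n - 1)"
  proof (intro bexI conjI)
    show "range (winding n w) \<in> CTN" using w(1) by (rule range_winding_in_CTN)
    show "circle_group (proj_init n ` range (winding n w))"
      unfolding proj_init_range_winding using w by (metis circle_group_range_winding)
    show "proj_tail n ` range (winding n w) = {TN_zero}" by (rule proj_tail_range_winding)
    show "dH G (range (winding n w)) \<le> 1 / 2 ^ (n - 1)" by (rule near)
  qed
qed

end
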